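(* Let $G\subset\mathbb{C}$ be a simply connected domain, let $\mathcal{S}\subset G$ be a smooth Jordan curve with bounded face $D$, let $\Gamma\subset\mathbb{C}$ be a smooth Jordan curve with bounded face $\Omega_-$ and unbounded face $\Omega_+$ (with $\infty\in\Omega_+$), and let $f:G\to\hat{\mathbb{C}}$ be meromorphic. Suppose there are non-negative integers $n_-,n_+$ such that $\mathcal{N}_f(w)=n_-$ for all $w\in\Omega_-$, $\mathcal{N}_f(w)=n_+$ for all $w\in\Omega_+$, and $\mathcal{N}_f(w)=\min(n_-,n_+)$ for all $w\in\Gamma$. Then $f(\mathcal{S})\subset\Gamma$ and $f$ has no critical point on $\mathcal{S}$.
   Context: For $w\in\hat{\mathbb{C}}$, $\mathcal{N}_f(w)$ denotes the number of preimages of $w$ under $f$ lying in $D$ (the bounded face of $\mathcal{S}$), counted with multiplicity. A critical point of a meromorphic function is a point at which it is not locally injective. *)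

theory Defs
  imports "HOL-Analysis.Analysis" "HOL-Library.Extended_Nat"
begin

text \<open>The Riemann sphere is modelled as complex option: Some w is the finite
point w, None is the point at infinity.\<close>

type_synonym csphere = "complex option"

definition smooth_jordan_curve :: "complex set \<Rightarrow> bool" where
  "smooth_jordan_curve S \<longleftrightarrow>
     (\<exists>\<gamma> \<gamma>'. simple_path \<gamma> \<and> pathfinish \<gamma> = pathstart \<gamma> \<and> path_image \<gamma> = S \<and>
        (\<forall>t\<in>{0..1}. (\<gamma> has_vector_derivative \<gamma>' t) (at t within {0..1}) \<and> \<gamma>' t \<noteq> 0) \<and>
        continuous_on {0..1} \<gamma>' \<and> \<gamma>' 0 = \<gamma>' 1)"

definition meromorphic_sphere :: "(complex \<Rightarrow> csphere) \<Rightarrow> complex set \<Rightarrow> bool" where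
  "meromorphic_sphere f G \<longleftrightarrow>
     open G \<and>
     (\<forall>z\<in>G. \<not> z islimpt {p\<in>G. f p = None}) \<and>
     (\<lambda>z. the (f z)) holomorphic_on {z\<in>G. f z \<noteq> None} \<and>
     (\<forall>p\<in>G. f p = None \<longrightarrow> filterlim (\<lambda>z. the (f z)) at_infinity (at p))"

definition local_chart :: "(complex \<Rightarrow> csphere) \<Rightarrow> complex \<Rightarrow> complex \<Rightarrow> complex" where
  "local_chart f z =
     (if f z = None then (\<lambda>x. case f x of None \<Rightarrow> 0 | Some v \<Rightarrow> inverse v)
      else (\<lambda>x. case f x of None \<Rightarrow> 0 | Some v \<Rightarrow> v))"

text \<open>Multiplicity of z as a preimage of f z: the order of the first
non-vanishing derivative (order of the zero of f - f z, resp. of 1/f at a pole);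
infinite if all derivatives vanish.\<close>
definition mero_mult :: "(complex \<Rightarrow> csphere) \<Rightarrow> complex \<Rightarrow> enat" where
  "mero_mult f z =
     (if \<exists>n\<ge>1. (deriv ^^ n) (local_chart f z) z \<noteq> 0
      then enat (LEAST n. n \<ge> 1 \<and> (deriv ^^ n) (local_chart f z) z \<noteq> 0)
      else \<infinity>)"

definition count_preimages :: "(complex \<Rightarrow> csphere) \<Rightarrow> complex set \<Rightarrow> csphere \<Rightarrow> enat" where
  "count_preimages f D w =
     (if finite {z\<in>D. f z = w} then (\<Sum>z\<in>{z\<in>D. f z = w}. mero_mult f z) else \<infinity>)"

definition critical_point :: "(complex \<Rightarrow> csphere) \<Rightarrow> complex \<Rightarrow> bool" where
  "critical_point f z \<longleftrightarrow> \<not> (\<exists>e>0. inj_on f (ball z e))"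

end

theory Submission
  imports Defs "HOL-Complex_Analysis.Complex_Analysis"
begin

text \<open>Let \<open>z0 \<in> S\<close> and let \<open>w0 = f z0\<close> have \<open>n\<close> preimages in \<open>D\<close>. Small disjoint discs around these
  preimages still contain \<open>n\<close> preimages of every value near \<open>w0\<close>, and they stay away from \<open>z0\<close>.
  Hence every point \<open>q \<in> D\<close> near \<open>z0\<close> with \<open>f q\<close> near \<open>w0\<close> is an additional preimage: the count
  of \<open>f q\<close> is at least \<open>n + 1\<close>. If \<open>w0 \<notin> \<Gamma>\<close>, the count is constant near \<open>w0\<close>, a contradiction. If
  \<open>w0 \<in> \<Gamma>\<close>, the count \<open>min n\<^sub>- n\<^sub>+\<close> at \<open>w0\<close> is also the count on a sector on one side of \<open>\<Gamma>\<close> at \<open>w0\<close>,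
  and \<open>D\<close> contains a sector at \<open>z0\<close>. A zero of \<open>f - w0\<close> of order \<open>k \<ge> 2\<close> multiplies angles by \<open>k\<close>,
  so it maps points of the sector in \<open>D\<close> into the sector at \<open>w0\<close>, again a contradiction. So \<open>f\<close>
  has multiplicity one at \<open>z0\<close>, i.e. it is locally injective there.\<close>

section \<open>Local charts of meromorphic functions\<close>

definition chart_value :: "csphere \<Rightarrow> csphere \<Rightarrow> complex" where
  "chart_value w0 w = (if w0 = None then (case w of None \<Rightarrow> 0 | Some a \<Rightarrow> inverse a)
                       else (case w of None \<Rightarrow> 0 | Some a \<Rightarrow> a))"

lemma local_chart_eq_chart_value: "local_chart f p = (\<lambda>x. chart_value (f p) (f x))"
  by (auto simp: local_chart_def chart_value_def fun_eq_iff)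

text \<open>Basic neighbourhoods on the Riemann sphere; around \<open>\<infinity>\<close> (\<open>None\<close>) it is the exterior of the
  disc of radius \<open>1/e\<close>.\<close>

definition sphere_near :: "csphere \<Rightarrow> real \<Rightarrow> csphere \<Rightarrow> bool" where
  "sphere_near w0 e w =
     (case w0 of None \<Rightarrow> w = None \<or> (\<exists>a. w = Some a \<and> a \<noteq> 0 \<and> cmod (inverse a) < e)
      | Some b \<Rightarrow> (\<exists>a. w = Some a \<and> cmod (a - b) < e))"

lemma sphere_near_mono: "sphere_near w0 e w \<Longrightarrow> e \<le> e' \<Longrightarrow> sphere_near w0 e' w"
  by (cases w0) (auto simp: sphere_near_def)

lemma meromorphic_sphere_punctured_ball:
  assumes mf: "meromorphic_sphere f G" and p: "p \<in> G"
  shows "\<exists>r>0. ball p r \<subseteq> G \<and>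
           (\<forall>x\<in>ball p r - {p}. \<exists>v. f x = Some v \<and> (f p = None \<longrightarrow> 1 < cmod v))"
proof -
  have "open G" and nl: "\<not> p islimpt {q\<in>G. f q = None}"
    using mf p unfolding meromorphic_sphere_def by auto
  obtain e1 where "e1 > 0" and e1: "\<And>x. x \<in> G \<Longrightarrow> f x = None \<Longrightarrow> x \<noteq> p \<Longrightarrow> e1 \<le> dist x p"
    using nl unfolding islimpt_approachable by (metis (mono_tags, lifting) mem_Collect_eq not_less)
  obtain e2 where "e2 > 0" and e2: "ball p e2 \<subseteq> G" using \<open>open G\<close> p openE by blast
  obtain e3 where "e3 > 0"
    and e3: "\<And>x. f p = None \<Longrightarrow> x \<noteq> p \<Longrightarrow> dist x p < e3 \<Longrightarrow> 1 < cmod (the (f x))"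
  proof (cases "f p = None")
    case True
    then have "filterlim (\<lambda>z. the (f z)) at_infinity (at p)"
      using mf p unfolding meromorphic_sphere_def by blast
    then have "eventually (\<lambda>x. 2 \<le> cmod (the (f x))) (at p)"
      by (simp add: filterlim_at_infinity_conv_norm_at_top filterlim_at_top)
    then obtain d where "d > 0" "\<And>x. x \<noteq> p \<Longrightarrow> dist x p < d \<Longrightarrow> 2 \<le> cmod (the (f x))"
      unfolding eventually_at by auto
    then show ?thesis using that[of d] by force
  qed (use that[of 1] in auto)
  define r where "r = min e1 (min e2 e3)"
  have "r > 0" using \<open>e1 > 0\<close> \<open>e2 > 0\<close> \<open>e3 > 0\<close> by (simp add: r_def)
  moreover have "ball p r \<subseteq> G" using e2 by (auto simp: r_def)
  moreover have "\<exists>v. f x = Some v \<and> (f p = None \<longrightarrow> 1 < cmod v)" if x: "x \<in> ball p r - {p}" for x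
  proof -
    have "x \<in> G" using x \<open>ball p r \<subseteq> G\<close> by blast
    then have "f x \<noteq> None" using e1[of x] x by (auto simp: r_def dist_commute)
    then show ?thesis using e3[of x] x by (auto simp: r_def dist_commute)
  qed
  ultimately show ?thesis by blast
qed

lemma local_chart_holomorphic_on_ball:
  assumes mf: "meromorphic_sphere f G" and sub: "ball p r \<subseteq> G"
    and punct: "\<forall>x\<in>ball p r - {p}. \<exists>v. f x = Some v \<and> (f p = None \<longrightarrow> 1 < cmod v)"
  shows "local_chart f p holomorphic_on ball p r"
proof (cases "r > 0")
  case False then show ?thesis by (simp add: ball_empty holomorphic_on_empty)
next
  case r: True
  have hol: "(\<lambda>z. the (f z)) holomorphic_on {z\<in>G. f z \<noteq> None}"
    using mf unfolding meromorphic_sphere_def by blast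
  have fin: "ball p r - {p} \<subseteq> {z\<in>G. f z \<noteq> None}" using sub punct by auto
  show ?thesis
  proof (cases "f p = None")
    case False
    then have fin': "ball p r \<subseteq> {z\<in>G. f z \<noteq> None}" using fin sub r by auto
    then have "(\<lambda>z. the (f z)) holomorphic_on ball p r" using holomorphic_on_subset[OF hol] by blast
    then show ?thesis
      by (rule holomorphic_transform) (use False fin' in \<open>auto simp: local_chart_def split: option.split\<close>)
  next
    case True
    have "(\<lambda>z. inverse (the (f z))) holomorphic_on ball p r - {p}"
      using holomorphic_on_subset[OF hol fin] punct True
      by (intro holomorphic_on_inverse) force+
    then have h: "local_chart f p holomorphic_on ball p r - {p}"
      by (rule holomorphic_transform) (use fin True in \<open>auto simp: local_chart_def split: option.split\<close>)
    text \<open>At a pole the chart \<open>1/f\<close> tends to \<open>0 = local_chart f p p\<close>, so the singularity is removable.\<close>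
    have "p \<in> G" using sub r by auto
    then have "filterlim (\<lambda>z. the (f z)) at_infinity (at p)"
      using mf True unfolding meromorphic_sphere_def by blast
    then have lim: "((\<lambda>z. inverse (the (f z))) \<longlongrightarrow> 0) (at p)"
      by (rule filterlim_compose[OF tendsto_inverse_0])
    have ev: "eventually (\<lambda>x. inverse (the (f x)) = local_chart f p x) (at p)"
    proof -
      have "inverse (the (f x)) = local_chart f p x" if x: "x \<in> ball p r - {p}" for x
      proof -
        obtain v where "f x = Some v" using fin x by blast
        then show ?thesis using True by (simp add: local_chart_def)
      qed
      then show ?thesis
        using eventually_at_ball'[OF r, of p UNIV] by (auto elim!: eventually_mono)
    qed
    have "(local_chart f p \<longlongrightarrow> 0) (at p)"
      using lim tendsto_cong[OF ev] by blast
    moreover have "local_chart f p p = 0" using True by (simp add: local_chart_def)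
    ultimately have "(local_chart f p \<longlongrightarrow> local_chart f p p) (at p within ball p r)"
      using tendsto_within_subset[of _ _ p UNIV "ball p r"] by simp
    with h show ?thesis
      by (auto intro: no_isolated_singularity'[of "{p}"])
  qed
qed

lemma chart_value_eq_imp_eq:
  assumes punct: "\<forall>x\<in>ball p r - {p}. \<exists>v. f x = Some v \<and> (f p = None \<longrightarrow> 1 < cmod v)"
    and x: "x \<in> ball p r" and near: "sphere_near (f p) e w"
    and eq: "chart_value (f p) (f x) = chart_value (f p) w"
  shows "f x = w"
proof (cases "x = p")
  case True
  then show ?thesis using near eq by (cases "f p") (auto simp: sphere_near_def chart_value_def)
next
  case False
  then obtain v where "f x = Some v" "f p = None \<longrightarrow> 1 < cmod v" using punct x by blast
  then show ?thesis using near eq by (cases "f p") (auto simp: sphere_near_def chart_value_def)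
qed

lemma eventually_sphere_near:
  assumes mf: "meromorphic_sphere f G" and z0: "z0 \<in> G" and e: "e > 0"
  shows "eventually (\<lambda>q. sphere_near (f z0) e (f q)) (at z0)"
proof -
  obtain r where r: "r > 0" "ball z0 r \<subseteq> G"
    and punct: "\<forall>x\<in>ball z0 r - {z0}. \<exists>v. f x = Some v \<and> (f z0 = None \<longrightarrow> 1 < cmod v)"
    using meromorphic_sphere_punctured_ball[OF mf z0] by blast
  define \<phi> where "\<phi> = local_chart f z0"
  have "isCont \<phi> z0"
    using local_chart_holomorphic_on_ball[OF mf r(2) punct] r unfolding \<phi>_def
    by (metis centre_in_ball continuous_on_eq_continuous_at holomorphic_on_imp_continuous_on open_ball)
  then have "eventually (\<lambda>q. dist (\<phi> q) (\<phi> z0) < e) (at z0)"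
    using e by (simp add: isCont_def tendstoD)
  moreover have "eventually (\<lambda>q. q \<in> ball z0 r - {z0}) (at z0)"
    using eventually_at_ball'[OF r(1), of z0 UNIV] by (auto elim!: eventually_mono)
  ultimately show ?thesis
  proof eventually_elim
    case (elim q)
    then obtain v where v: "f q = Some v" "f z0 = None \<longrightarrow> 1 < cmod v" using punct by blast
    then show ?case using elim
      by (cases "f z0") (auto simp: \<phi>_def local_chart_def sphere_near_def dist_norm)
  qed
qed

lemma islimpt_imp_sphere_near_point:
  assumes mf: "meromorphic_sphere f G" and z0: "z0 \<in> G" and lim: "z0 islimpt D"
    and "e > 0" and "\<rho> > 0"
  shows "\<exists>q\<in>D. dist q z0 < \<rho> \<and> sphere_near (f z0) e (f q)"
proof -
  obtain d where "d > 0" and d: "\<And>q. q \<noteq> z0 \<Longrightarrow> dist q z0 < d \<Longrightarrow> sphere_near (f z0) e (f q)"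
    using eventually_sphere_near[OF mf z0 \<open>e > 0\<close>] unfolding eventually_at by auto
  obtain q where "q \<in> D" "q \<noteq> z0" "dist q z0 < min d \<rho>"
    using lim \<open>d > 0\<close> \<open>\<rho> > 0\<close> unfolding islimpt_approachable by (metis min_less_iff_conj)
  then show ?thesis using d by auto
qed

section \<open>Multiplicities and preimage counts\<close>

lemma mero_mult_ge_1: "mero_mult f z \<ge> 1"
proof (cases "\<exists>n\<ge>1. (deriv ^^ n) (local_chart f z) z \<noteq> 0")
  case True
  then have "(LEAST n. n \<ge> 1 \<and> (deriv ^^ n) (local_chart f z) z \<noteq> 0) \<ge> 1"
    by (metis (mono_tags, lifting) LeastI)
  then show ?thesis using True by (simp add: mero_mult_def one_enat_def)
qed (auto simp: mero_mult_def)

lemma mero_mult_enatD: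
  assumes "mero_mult f p = enat k"
  shows "k \<ge> 1" "(deriv ^^ k) (local_chart f p) p \<noteq> 0"
    "\<And>i. 0 < i \<Longrightarrow> i < k \<Longrightarrow> (deriv ^^ i) (local_chart f p) p = 0"
proof -
  let ?P = "\<lambda>n. n \<ge> 1 \<and> (deriv ^^ n) (local_chart f p) p \<noteq> 0"
  have ex: "\<exists>n. ?P n" using assms by (auto simp: mero_mult_def split: if_splits)
  then have k: "k = (LEAST n. ?P n)" using assms by (auto simp: mero_mult_def)
  show "k \<ge> 1" "(deriv ^^ k) (local_chart f p) p \<noteq> 0" using LeastI_ex[OF ex] by (simp_all add: k)
  show "(deriv ^^ i) (local_chart f p) p = 0" if "0 < i" "i < k" for i
    using not_less_Least[of i ?P] that by (auto simp: k)
qed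

lemma mero_mult_infinity_iff:
  "mero_mult f p = \<infinity> \<longleftrightarrow> (\<forall>n\<ge>1. (deriv ^^ n) (local_chart f p) p = 0)"
  by (auto simp: mero_mult_def)

lemma count_preimages_ge_card:
  assumes "finite K" "K \<subseteq> {z\<in>A. f z = w}"
  shows "enat (card K) \<le> count_preimages f A w"
proof (cases "finite {z\<in>A. f z = w}")
  case True
  have "enat (card K) = (\<Sum>z\<in>K. 1)" by (simp add: of_nat_eq_enat)
  also have "\<dots> \<le> (\<Sum>z\<in>K. mero_mult f z)" by (rule sum_mono) (rule mero_mult_ge_1)
  also have "\<dots> \<le> (\<Sum>z\<in>{z\<in>A. f z = w}. mero_mult f z)" by (rule sum_mono2[OF True assms(2)]) simp
  finally show ?thesis using True by (simp add: count_preimages_def)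
qed (simp add: count_preimages_def)

lemma count_preimages_ge_mero_mult:
  assumes "p \<in> A"
  shows "mero_mult f p \<le> count_preimages f A (f p)"
proof (cases "finite {z\<in>A. f z = f p}")
  case True
  then show ?thesis using assms by (auto simp: count_preimages_def intro: member_le_sum)
qed (simp add: count_preimages_def)

lemma sum_count_preimages_le_UN:
  assumes I: "finite I" and disj: "disjoint_family_on A I"
  shows "(\<Sum>i\<in>I. count_preimages f (A i) w) \<le> count_preimages f (\<Union>i\<in>I. A i) w"
proof (cases "finite {z\<in>(\<Union>i\<in>I. A i). f z = w}")
  case True
  define T where "T i = {z\<in>A i. f z = w}" for i
  have fin: "finite (T i)" if "i \<in> I" for i
    using that by (auto simp: T_def intro: finite_subset[OF _ True])
  have "(\<Sum>i\<in>I. count_preimages f (A i) w) = (\<Sum>i\<in>I. \<Sum>z\<in>T i. mero_mult f z)"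
    using fin by (simp add: count_preimages_def T_def)
  also have "\<dots> = (\<Sum>z\<in>(\<Union>i\<in>I. T i). mero_mult f z)"
    using I fin disj by (intro sum.UNION_disjoint[symmetric]) (auto simp: T_def disjoint_family_on_def)
  also have "(\<Union>i\<in>I. T i) = {z\<in>(\<Union>i\<in>I. A i). f z = w}" by (auto simp: T_def)
  finally show ?thesis using True by (simp add: count_preimages_def)
qed (simp add: count_preimages_def)

lemma count_preimages_insert_ge:
  assumes "A \<subseteq> D" "q \<in> D - A"
  shows "count_preimages f A (f q) + 1 \<le> count_preimages f D (f q)"
proof (cases "finite {z\<in>D. f z = f q}")
  case True
  let ?P = "\<lambda>B. {z\<in>B. f z = f q}"
  have fin: "finite (?P A)" using assms by (auto intro: finite_subset[OF _ True])
  have "count_preimages f A (f q) + 1 \<le> (\<Sum>z\<in>?P A. mero_mult f z) + mero_mult f q"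
    using fin by (simp add: count_preimages_def add_left_mono mero_mult_ge_1)
  also have "\<dots> = (\<Sum>z\<in>insert q (?P A). mero_mult f z)"
    using fin assms by (simp add: add.commute)
  also have "\<dots> \<le> (\<Sum>z\<in>?P D. mero_mult f z)"
    by (rule sum_mono2[OF True]) (use assms in auto)
  finally show ?thesis using True by (simp add: count_preimages_def)
qed (simp add: count_preimages_def)

lemma not_critical_point_if_mero_mult_1:
  assumes mf: "meromorphic_sphere f G" and z: "z \<in> G" and "mero_mult f z = 1"
  shows "\<not> critical_point f z"
proof -
  obtain r where "r > 0" "ball z r \<subseteq> G"
    and punct: "\<forall>x\<in>ball z r - {z}. \<exists>v. f x = Some v \<and> (f z = None \<longrightarrow> 1 < cmod v)"
    using meromorphic_sphere_punctured_ball[OF mf z] by blast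
  have hol: "local_chart f z holomorphic_on ball z r"
    by (rule local_chart_holomorphic_on_ball[OF mf \<open>ball z r \<subseteq> G\<close> punct])
  have "deriv (local_chart f z) z \<noteq> 0"
    using mero_mult_enatD(2)[of f z 1] \<open>mero_mult f z = 1\<close> by (simp add: one_enat_def)
  then obtain r' where "r' > 0" and inj: "inj_on (local_chart f z) (ball z r')"
    using has_complex_derivative_locally_injective[OF hol] \<open>r > 0\<close> by (metis centre_in_ball open_ball)
  have "inj_on f (ball z r')"
  proof (rule inj_onI)
    fix x y assume "x \<in> ball z r'" "y \<in> ball z r'" "f x = f y"
    then show "x = y"
      using inj_onD[OF inj] by (simp add: local_chart_eq_chart_value)
  qed
  then show ?thesis using \<open>r' > 0\<close> by (auto simp: critical_point_def)
qed

lemma mero_mult_infinite_imp_locally_constant: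
  assumes mf: "meromorphic_sphere f G" and z: "z \<in> G" and "mero_mult f z = \<infinity>"
  shows "\<exists>r>0. \<forall>x\<in>ball z r. f x = f z"
proof -
  obtain r where "r > 0" "ball z r \<subseteq> G"
    and punct: "\<forall>x\<in>ball z r - {z}. \<exists>v. f x = Some v \<and> (f z = None \<longrightarrow> 1 < cmod v)"
    using meromorphic_sphere_punctured_ball[OF mf z] by blast
  have "local_chart f z x = local_chart f z z" if "x \<in> ball z r" for x
  proof (rule holomorphic_fun_eq_const_on_connected[of "local_chart f z" "ball z r" z x])
    show "local_chart f z holomorphic_on ball z r"
      by (rule local_chart_holomorphic_on_ball[OF mf \<open>ball z r \<subseteq> G\<close> punct])
    show "(deriv ^^ n) (local_chart f z) z = 0" if "0 < n" for n
      using \<open>mero_mult f z = \<infinity>\<close> that by (simp add: mero_mult_infinity_iff)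
  qed (use that \<open>r > 0\<close> in auto)
  moreover have "sphere_near (f z) 1 (f z)" by (cases "f z") (auto simp: sphere_near_def)
  ultimately have "f x = f z" if "x \<in> ball z r" for x
    using chart_value_eq_imp_eq[OF punct that] that by (simp add: local_chart_eq_chart_value)
  then show ?thesis using \<open>r > 0\<close> by blast
qed

lemma count_preimages_infinite_if_mero_mult_infinite:
  assumes mf: "meromorphic_sphere f G" and "z \<in> G" "z islimpt D" "mero_mult f z = \<infinity>"
  shows "count_preimages f D (f z) = \<infinity>"
proof -
  obtain r where "r > 0" "\<forall>x\<in>ball z r. f x = f z"
    using mero_mult_infinite_imp_locally_constant[OF assms(1,2,4)] by blast
  then have "D \<inter> ball z r \<subseteq> {x\<in>D. f x = f z}" by blast
  moreover have "infinite (D \<inter> ball z r)" using \<open>z islimpt D\<close> \<open>r > 0\<close> islimpt_eq_infinite_ball by blast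
  ultimately show ?thesis by (auto simp: count_preimages_def dest: finite_subset)
qed

lemma mero_mult_factorization:
  assumes mf: "meromorphic_sphere f G" and "z0 \<in> G" and fz0: "f z0 = Some w0"
    and mult: "mero_mult f z0 = enat k"
  obtains r \<phi> h where "r > 0" "\<And>x. x \<in> ball z0 r \<Longrightarrow> f x = Some (\<phi> x)" "isCont h z0" "h z0 \<noteq> 0"
    "\<And>z. z \<in> ball z0 r \<Longrightarrow> \<phi> z - w0 = (z - z0) ^ k * h z"
proof -
  obtain r0 where "r0 > 0" "ball z0 r0 \<subseteq> G"
    and punct: "\<forall>x\<in>ball z0 r0 - {z0}. \<exists>v. f x = Some v \<and> (f z0 = None \<longrightarrow> 1 < cmod v)"
    using meromorphic_sphere_punctured_ball[OF mf \<open>z0 \<in> G\<close>] by blast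
  define \<phi> where "\<phi> = local_chart f z0"
  have hol: "\<phi> holomorphic_on ball z0 r0"
    unfolding \<phi>_def by (rule local_chart_holomorphic_on_ball[OF mf \<open>ball z0 r0 \<subseteq> G\<close> punct])
  have f\<phi>: "f x = Some (\<phi> x)" if x: "x \<in> ball z0 r0" for x
  proof (cases "x = z0")
    case False
    then obtain v where "f x = Some v" using punct x by blast
    then show ?thesis using fz0 by (simp add: \<phi>_def local_chart_def)
  qed (simp add: fz0 \<phi>_def local_chart_def)
  note kk = mero_mult_enatD[OF mult, folded \<phi>_def]
  obtain h r1 where "0 < r1" and holh: "h holomorphic_on ball z0 r1"
    and fac: "\<And>w. w \<in> ball z0 r1 \<Longrightarrow> \<phi> w - \<phi> z0 = (w - z0) ^ k * h w"
    and hnz: "\<And>w. w \<in> ball z0 r1 \<Longrightarrow> h w \<noteq> 0"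
    by (rule holomorphic_factor_order_of_zero[OF hol open_ball _ _ kk(2) kk(3)])
       (use \<open>r0 > 0\<close> kk(1) in simp_all)
  have "isCont h z0"
    using holh \<open>0 < r1\<close> holomorphic_on_imp_continuous_on
    by (metis centre_in_ball continuous_on_eq_continuous_at open_ball)
  moreover have "\<phi> z0 = w0" using f\<phi>[of z0] fz0 \<open>r0 > 0\<close> by simp
  ultimately show ?thesis
    using that[of "min r0 r1" \<phi> h] f\<phi> fac hnz[of z0] \<open>r0 > 0\<close> \<open>0 < r1\<close> by simp
qed

section \<open>Lower semicontinuity of the preimage count\<close>

lemma card_preimages_of_power:
  fixes h :: "'a \<Rightarrow> complex"
  assumes inj: "inj_on h B" and cover: "ball 0 \<eta> \<subseteq> h ` B" and "\<eta> \<ge> 0"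
    and k: "k \<ge> 1" and a: "a \<noteq> 0" "cmod a < \<eta> ^ k"
  shows "\<exists>K. finite K \<and> card K = k \<and> K \<subseteq> B \<and> (\<forall>z\<in>K. h z ^ k = a)"
proof -
  define roots where "roots = {u. u ^ k = a}"
  have "roots \<subseteq> h ` B"
  proof
    fix u assume "u \<in> roots"
    then have "cmod u ^ k < \<eta> ^ k" using a by (simp add: roots_def flip: norm_power)
    then have "cmod u < \<eta>" using power_less_imp_less_base \<open>\<eta> \<ge> 0\<close> by blast
    then show "u \<in> h ` B" using cover by auto
  qed
  then have "inj_on (inv_into B h) roots" by (rule inj_on_inv_into)
  moreover have "card roots = k" "finite roots"
    using card_nth_roots[OF a(1)] k by (auto simp: roots_def)
  ultimately show ?thesis
    using \<open>roots \<subseteq> h ` B\<close> inj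
    by (intro exI[of _ "inv_into B h ` roots"])
       (auto simp: card_image roots_def inv_into_into f_inv_into_f)
qed

lemma local_chart_power_of_coordinate:
  assumes mf: "meromorphic_sphere f G" and p: "p \<in> G" and mult: "mero_mult f p = enat k"
    and "R > 0"
  obtains r \<eta> h where "0 < r" "r \<le> R" "\<eta> > 0"
    "\<forall>x\<in>ball p r - {p}. \<exists>v. f x = Some v \<and> (f p = None \<longrightarrow> 1 < cmod v)"
    "inj_on h (ball p r)" "ball 0 \<eta> \<subseteq> h ` ball p r"
    "\<And>z. z \<in> ball p r \<Longrightarrow> local_chart f p z - local_chart f p p = h z ^ k"
proof -
  obtain r0 where r0: "r0 > 0" "ball p r0 \<subseteq> G"
    and punct: "\<forall>x\<in>ball p r0 - {p}. \<exists>v. f x = Some v \<and> (f p = None \<longrightarrow> 1 < cmod v)"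
    using meromorphic_sphere_punctured_ball[OF mf p] by blast
  define \<phi> where "\<phi> = local_chart f p"
  have hol: "\<phi> holomorphic_on ball p r0"
    unfolding \<phi>_def by (rule local_chart_holomorphic_on_ball[OF mf r0(2) punct])
  note kk = mero_mult_enatD[OF mult, folded \<phi>_def]
  obtain g r1 where "0 < r1" and holg: "g holomorphic_on ball p r1"
    and fac: "\<And>w. w \<in> ball p r1 \<Longrightarrow> \<phi> w - \<phi> p = ((w - p) * g w) ^ k"
    and gnz: "\<And>w. w \<in> ball p r1 \<Longrightarrow> g w \<noteq> 0"
    by (rule holomorphic_factor_order_of_zero_strong[OF hol open_ball _ _ kk(2) kk(3)])
       (use r0 kk(1) in auto)
  define h where "h w = (w - p) * g w" for w
  have holh: "h holomorphic_on ball p r1" unfolding h_def by (intro holomorphic_intros holg)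
  have "(g has_field_derivative deriv g p) (at p)"
    using holg \<open>0 < r1\<close> by (meson centre_in_ball holomorphic_derivI open_ball)
  then have "(h has_field_derivative g p) (at p)"
    unfolding h_def by (auto intro!: derivative_eq_intros)
  then have "deriv h p \<noteq> 0" using gnz \<open>0 < r1\<close> by (simp add: DERIV_imp_deriv)
  then obtain r2 where "r2 > 0" "ball p r2 \<subseteq> ball p r1" "inj_on h (ball p r2)"
    using has_complex_derivative_locally_injective[OF holh] \<open>0 < r1\<close> by (metis centre_in_ball open_ball)
  define r where "r = min r2 (min R r0)"
  have r: "r > 0" "r \<le> R" "ball p r \<subseteq> ball p r0" "ball p r \<subseteq> ball p r1"
    using \<open>r2 > 0\<close> \<open>R > 0\<close> r0 \<open>ball p r2 \<subseteq> ball p r1\<close> by (auto simp: r_def)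
  have inj: "inj_on h (ball p r)"
    using \<open>inj_on h (ball p r2)\<close> by (rule inj_on_subset) (auto simp: r_def)
  have "open (h ` ball p r)"
    using holomorphic_on_subset[OF holh r(4)] inj by (intro open_mapping_thm3) auto
  moreover have "0 \<in> h ` ball p r" using r by (auto simp: h_def intro!: image_eqI[of _ _ p])
  ultimately obtain \<eta> where "\<eta> > 0" "ball 0 \<eta> \<subseteq> h ` ball p r" using openE by blast
  show ?thesis
  proof (rule that[OF r(1,2) \<open>\<eta> > 0\<close> _ inj \<open>ball 0 \<eta> \<subseteq> h ` ball p r\<close>])
    show "\<forall>x\<in>ball p r - {p}. \<exists>v. f x = Some v \<and> (f p = None \<longrightarrow> 1 < cmod v)"
      using punct r(3) by blast
    show "local_chart f p z - local_chart f p p = h z ^ k" if "z \<in> ball p r" for z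
      using fac[of z] that r(4) by (auto simp: h_def \<phi>_def)
  qed
qed

lemma count_preimages_ball_ge_mero_mult:
  assumes mf: "meromorphic_sphere f G" and p: "p \<in> G" and mult: "mero_mult f p = enat k"
    and "R > 0"
  shows "\<exists>r e. 0 < r \<and> r \<le> R \<and> 0 < e \<and>
           (\<forall>w. sphere_near (f p) e w \<longrightarrow> enat k \<le> count_preimages f (ball p r) w)"
proof -
  text \<open>Near \<open>p\<close> the chart is a \<open>k\<close>-th power of a local coordinate \<open>h\<close>, so each value near
    \<open>f p\<close> has \<open>k\<close> preimages given by the \<open>k\<close>-th roots.\<close>
  obtain r \<eta> h where r: "0 < r" "r \<le> R" and "\<eta> > 0"
    and punct: "\<forall>x\<in>ball p r - {p}. \<exists>v. f x = Some v \<and> (f p = None \<longrightarrow> 1 < cmod v)"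
    and inj: "inj_on h (ball p r)" and cover: "ball 0 \<eta> \<subseteq> h ` ball p r"
    and power: "\<And>z. z \<in> ball p r \<Longrightarrow> local_chart f p z - local_chart f p p = h z ^ k"
    using local_chart_power_of_coordinate[OF assms] by blast
  have "k \<ge> 1" using mero_mult_enatD(1)[OF mult] .
  have "enat k \<le> count_preimages f (ball p r) w" if near: "sphere_near (f p) (\<eta> ^ k) w" for w
  proof -
    define a where "a = chart_value (f p) w - local_chart f p p"
    have "cmod a < \<eta> ^ k" "a = 0 \<Longrightarrow> w = f p"
      using near \<open>\<eta> > 0\<close>
      by (cases "f p"; auto simp: a_def local_chart_def sphere_near_def chart_value_def)+
    show ?thesis
    proof (cases "a = 0")
      case True
      then show ?thesis
        using count_preimages_ge_mero_mult[of p "ball p r" f] mult r \<open>a = 0 \<Longrightarrow> w = f p\<close> by simp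
    next
      case False
      then obtain K where K: "finite K" "card K = k" "K \<subseteq> ball p r" "\<forall>z\<in>K. h z ^ k = a"
        using card_preimages_of_power[OF inj cover _ \<open>k \<ge> 1\<close> _ \<open>cmod a < \<eta> ^ k\<close>] \<open>\<eta> > 0\<close> by auto
      have "f z = w" if "z \<in> K" for z
      proof (rule chart_value_eq_imp_eq[OF punct _ near])
        show "z \<in> ball p r" using that K by auto
        then show "chart_value (f p) (f z) = chart_value (f p) w"
          using power[of z] K that by (simp add: a_def local_chart_eq_chart_value)
      qed
      then have "K \<subseteq> {z\<in>ball p r. f z = w}" using K by blast
      then show ?thesis using count_preimages_ge_card[of K "ball p r" f w] K by simp
    qed
  qed
  then show ?thesis using r \<open>\<eta> > 0\<close> by (intro exI[of _ r] exI[of _ "\<eta> ^ k"]) auto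
qed

lemma finite_set_separated:
  fixes S :: "'a::metric_space set"
  assumes "finite S"
  shows "\<exists>d>0. \<forall>x\<in>S. \<forall>y\<in>S. x \<noteq> y \<longrightarrow> d \<le> dist x y"
  using assms
proof (induction S rule: finite_induct)
  case (insert a S)
  obtain d where "d > 0" "\<forall>x\<in>S. \<forall>y\<in>S. x \<noteq> y \<longrightarrow> d \<le> dist x y" using insert.IH by blast
  moreover obtain \<delta> where "\<delta> > 0" "\<forall>x\<in>S. x \<noteq> a \<longrightarrow> \<delta> \<le> dist a x"
    using finite_set_avoid[OF insert.hyps(1)] by blast
  ultimately show ?case
    by (intro exI[of _ "min d \<delta>"]) (auto simp: dist_commute min.coboundedI1 min.coboundedI2)
qed (use zero_less_one in blast)

lemma finite_set_isolating_balls: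
  fixes P :: "'a::metric_space set"
  assumes "finite P" "P \<subseteq> D" "open D" "z0 \<notin> P"
  shows "\<exists>\<rho>>0. \<exists>R. (\<forall>p\<in>P. R p > 0 \<and> ball p (R p) \<subseteq> D \<and> ball p (R p) \<inter> ball z0 \<rho> = {}) \<and>
                  disjoint_family_on (\<lambda>p. ball p (R p)) P"
proof -
  obtain d where "d > 0" and sep: "\<forall>x\<in>insert z0 P. \<forall>y\<in>insert z0 P. x \<noteq> y \<longrightarrow> d \<le> dist x y"
    using finite_set_separated[of "insert z0 P"] \<open>finite P\<close> by blast
  have "\<exists>s>0. ball p s \<subseteq> D" if "p \<in> P" for p
    using that assms(2,3) by (simp add: open_contains_ball subset_eq)
  then obtain s where s: "\<And>p. p \<in> P \<Longrightarrow> s p > 0 \<and> ball p (s p) \<subseteq> D" by metis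
  define R where "R p = min (d/2) (s p)" for p
  have "R p > 0" "ball p (R p) \<subseteq> D" if "p \<in> P" for p
    using s[OF that] \<open>d > 0\<close> by (auto simp: R_def)
  moreover have "ball p (R p) \<inter> ball z0 (d/2) = {}" if "p \<in> P" for p
  proof (rule disjoint_ballI)
    have "d \<le> dist p z0" using sep that \<open>z0 \<notin> P\<close> by fastforce
    then show "R p + d/2 \<le> dist p z0" by (simp add: R_def)
  qed
  moreover have "disjoint_family_on (\<lambda>p. ball p (R p)) P"
    unfolding disjoint_family_on_def
  proof (intro ballI impI disjoint_ballI)
    fix p p' assume "p \<in> P" "p' \<in> P" "p \<noteq> p'"
    then have "d \<le> dist p p'" using sep by blast
    then show "R p + R p' \<le> dist p p'" by (simp add: R_def)
  qed
  moreover have "d/2 > 0" using \<open>d > 0\<close> by simp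
  ultimately show ?thesis by blast
qed

lemma count_preimages_lower_semicontinuous:
  assumes mf: "meromorphic_sphere f G" and "D \<subseteq> G" "open D" "z0 \<notin> D"
    and cnt: "count_preimages f D w0 = enat n"
  shows "\<exists>e>0. \<exists>\<rho>>0. \<exists>A\<subseteq>D. A \<inter> ball z0 \<rho> = {} \<and>
           (\<forall>w. sphere_near w0 e w \<longrightarrow> enat n \<le> count_preimages f A w)"
proof -
  define P where "P = {z\<in>D. f z = w0}"
  have "finite P" using cnt by (auto simp: count_preimages_def P_def split: if_splits)
  have sum: "(\<Sum>p\<in>P. mero_mult f p) = enat n"
    using cnt \<open>finite P\<close> by (simp add: count_preimages_def P_def)
  have "\<exists>k. mero_mult f p = enat k" if "p \<in> P" for p
    using member_le_sum[of p P "mero_mult f"] that \<open>finite P\<close> sum by (simp add: enat_ile)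
  then obtain k where k: "\<And>p. p \<in> P \<Longrightarrow> mero_mult f p = enat (k p)" by metis
  obtain \<rho> R where "\<rho> > 0" and R: "\<forall>p\<in>P. R p > 0 \<and> ball p (R p) \<subseteq> D \<and> ball p (R p) \<inter> ball z0 \<rho> = {}"
    and disj: "disjoint_family_on (\<lambda>p. ball p (R p)) P"
    using finite_set_isolating_balls[OF \<open>finite P\<close> _ \<open>open D\<close>] \<open>z0 \<notin> D\<close> by (force simp: P_def)
  have "\<exists>r e. 0 < r \<and> r \<le> R p \<and> 0 < e \<and>
          (\<forall>w. sphere_near w0 e w \<longrightarrow> enat (k p) \<le> count_preimages f (ball p r) w)" if "p \<in> P" for p
    using count_preimages_ball_ge_mero_mult[OF mf _ k[OF that], of "R p"] that R \<open>D \<subseteq> G\<close>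
    by (auto simp: P_def)
  then obtain r e where re: "\<And>p. p \<in> P \<Longrightarrow> 0 < r p \<and> r p \<le> R p \<and> 0 < e p \<and>
          (\<forall>w. sphere_near w0 (e p) w \<longrightarrow> enat (k p) \<le> count_preimages f (ball p (r p)) w)"
    by metis
  have small: "ball p (r p) \<subseteq> ball p (R p)" if "p \<in> P" for p
    using re[OF that] by (simp add: subset_ball)
  define A where "A = (\<Union>p\<in>P. ball p (r p))"
  define E where "E = Min (insert 1 (e ` P))"
  have "E > 0" using \<open>finite P\<close> re by (auto simp: E_def)
  moreover have "A \<subseteq> D" "A \<inter> ball z0 \<rho> = {}" using R small by (fastforce simp: A_def)+
  moreover have "enat n \<le> count_preimages f A w" if near: "sphere_near w0 E w" for w
  proof -
    have "enat n = (\<Sum>p\<in>P. enat (k p))" using sum k by simp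
    also have "\<dots> \<le> (\<Sum>p\<in>P. count_preimages f (ball p (r p)) w)"
    proof (rule sum_mono)
      fix p assume "p \<in> P"
      then have "sphere_near w0 (e p) w"
        using sphere_near_mono[OF near] \<open>finite P\<close> by (simp add: E_def)
      then show "enat (k p) \<le> count_preimages f (ball p (r p)) w" using re[OF \<open>p \<in> P\<close>] by blast
    qed
    also have "\<dots> \<le> count_preimages f A w"
    proof -
      have "disjoint_family_on (\<lambda>p. ball p (r p)) P"
        unfolding disjoint_family_on_def
      proof (intro ballI impI)
        fix p p' assume "p \<in> P" "p' \<in> P" "p \<noteq> p'"
        then have "ball p (R p) \<inter> ball p' (R p') = {}" using disj by (simp add: disjoint_family_on_def)
        then show "ball p (r p) \<inter> ball p' (r p') = {}"
          using small[OF \<open>p \<in> P\<close>] small[OF \<open>p' \<in> P\<close>] by blast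
      qed
      then show ?thesis unfolding A_def by (rule sum_count_preimages_le_UN[OF \<open>finite P\<close>])
    qed
    finally show ?thesis .
  qed
  ultimately show ?thesis using \<open>\<rho> > 0\<close> by blast
qed

text \<open>The extra preimage is \<open>q\<close> itself, which lies outside the discs around the preimages of \<open>w0\<close>.\<close>

lemma count_preimages_jump:
  assumes mf: "meromorphic_sphere f G" and "D \<subseteq> G" "open D" "z0 \<notin> D"
    and cnt: "count_preimages f D w0 = enat n"
  shows "\<exists>e>0. \<exists>\<rho>>0. \<forall>q\<in>D. dist q z0 < \<rho> \<longrightarrow> sphere_near w0 e (f q) \<longrightarrow>
           enat n + 1 \<le> count_preimages f D (f q)"
proof -
  obtain e \<rho> A where "e > 0" "\<rho> > 0" "A \<subseteq> D" "A \<inter> ball z0 \<rho> = {}"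
    and lsc: "\<forall>w. sphere_near w0 e w \<longrightarrow> enat n \<le> count_preimages f A w"
    using count_preimages_lower_semicontinuous[OF assms] by blast
  have "enat n + 1 \<le> count_preimages f D (f q)"
    if "q \<in> D" "dist q z0 < \<rho>" "sphere_near w0 e (f q)" for q
  proof -
    have "q \<in> D - A" using that \<open>A \<inter> ball z0 \<rho> = {}\<close> by (auto simp: dist_commute)
    then show ?thesis
      using count_preimages_insert_ge[OF \<open>A \<subseteq> D\<close>] lsc that(3) by (meson add_right_mono order_trans)
  qed
  then show ?thesis using \<open>e > 0\<close> \<open>\<rho> > 0\<close> by blast
qed

section \<open>Normal sectors of smooth Jordan curves\<close>

text \<open>For a unit vector \<open>\<nu>\<close>: the points of the disc of radius \<open>\<delta>\<close> around \<open>c\<close> seen from \<open>c\<close> at an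
  angle to \<open>\<nu>\<close> whose cosine exceeds \<open>\<kappa>\<close>.\<close>

definition sector :: "complex \<Rightarrow> complex \<Rightarrow> real \<Rightarrow> real \<Rightarrow> complex set" where
  "sector c \<nu> \<kappa> \<delta> = {y. cmod (y - c) < \<delta> \<and> \<kappa> * cmod (y - c) < Re ((y - c) * cnj \<nu>)}"

lemma convex_sector:
  assumes "\<kappa> \<ge> 0"
  shows "convex (sector c \<nu> \<kappa> \<delta>)"
proof (rule convexI)
  fix x y :: complex and u v :: real
  assume x: "x \<in> sector c \<nu> \<kappa> \<delta>" and y: "y \<in> sector c \<nu> \<kappa> \<delta>"
    and "0 \<le> u" "0 \<le> v" "u + v = 1"
  have e: "u *\<^sub>R x + v *\<^sub>R y - c = u *\<^sub>R (x - c) + v *\<^sub>R (y - c)"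
    using \<open>u + v = 1\<close> by (simp add: algebra_simps flip: scaleR_add_left)
  have n: "cmod (u *\<^sub>R x + v *\<^sub>R y - c) \<le> u * cmod (x - c) + v * cmod (y - c)"
    unfolding e using norm_triangle_ineq[of "u *\<^sub>R (x - c)" "v *\<^sub>R (y - c)"] \<open>0 \<le> u\<close> \<open>0 \<le> v\<close> by simp
  have r: "Re ((u *\<^sub>R x + v *\<^sub>R y - c) * cnj \<nu>) = u * Re ((x - c) * cnj \<nu>) + v * Re ((y - c) * cnj \<nu>)"
    unfolding e by (simp add: scaleR_conv_of_real algebra_simps)
  define X Y RX RY where "X = cmod (x - c)" "Y = cmod (y - c)"
    "RX = Re ((x - c) * cnj \<nu>)" "RY = Re ((y - c) * cnj \<nu>)"
  have xy: "X < \<delta>" "\<kappa> * X < RX" "Y < \<delta>" "\<kappa> * Y < RY"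
    using x y by (simp_all add: sector_def X_Y_RX_RY_def)
  text \<open>One of \<open>u, v\<close> is positive, which makes the strict inequalities survive.\<close>
  have "u * X + v * Y < u * \<delta> + v * \<delta> \<and> u * (\<kappa> * X) + v * (\<kappa> * Y) < u * RX + v * RY"
  proof (cases "u = 0")
    case True then show ?thesis using \<open>u + v = 1\<close> xy by simp
  next
    case False
    then have "u > 0" using \<open>0 \<le> u\<close> by simp
    then show ?thesis using xy \<open>0 \<le> v\<close>
      by (intro conjI add_less_le_mono mult_strict_left_mono mult_left_mono) simp_all
  qed
  moreover have "u * \<delta> + v * \<delta> = \<delta>" using \<open>u + v = 1\<close> by (simp flip: distrib_right)
  moreover have "\<kappa> * cmod (u *\<^sub>R x + v *\<^sub>R y - c) \<le> u * (\<kappa> * X) + v * (\<kappa> * Y)"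
    using mult_left_mono[OF n assms] by (simp add: X_Y_RX_RY_def algebra_simps)
  ultimately show "u *\<^sub>R x + v *\<^sub>R y \<in> sector c \<nu> \<kappa> \<delta>"
    using n r by (simp add: sector_def X_Y_RX_RY_def)
qed

lemma axis_point_in_sector:
  assumes "cmod \<nu> = 1" "\<kappa> < 1" "\<delta> > 0"
  shows "c + of_real (\<delta> / 2) * \<nu> \<in> sector c \<nu> \<kappa> \<delta>"
proof -
  have "\<nu> * cnj \<nu> = 1" using assms(1) by (simp add: complex_norm_square[symmetric])
  then have "(c + of_real (\<delta> / 2) * \<nu> - c) * cnj \<nu> = of_real (\<delta> / 2)" by (simp add: mult.assoc)
  then have r: "Re ((c + of_real (\<delta> / 2) * \<nu> - c) * cnj \<nu>) = \<delta> / 2" by (simp only: Re_complex_of_real)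
  have n: "cmod (c + of_real (\<delta> / 2) * \<nu> - c) = \<delta> / 2" using assms by (simp add: norm_mult)
  show ?thesis unfolding sector_def mem_Collect_eq n r using assms by simp
qed

lemma islimpt_sector:
  assumes "cmod \<nu> = 1" "\<kappa> < 1" "\<delta> > 0"
  shows "c islimpt sector c \<nu> \<kappa> \<delta>"
proof (rule islimpt_approachable[THEN iffD2], intro allI impI)
  fix e :: real assume "e > 0"
  have "c + of_real (min e \<delta> / 2) * \<nu> \<in> sector c \<nu> \<kappa> (min e \<delta>)"
    using assms \<open>e > 0\<close> by (intro axis_point_in_sector) auto
  then show "\<exists>x'\<in>sector c \<nu> \<kappa> \<delta>. x' \<noteq> c \<and> dist x' c < e"
    by (intro bexI[of _ "c + of_real (min e \<delta> / 2) * \<nu>"]) (auto simp: sector_def dist_norm)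
qed

lemma sector_disjoint_if_flat:
  assumes "\<And>x. x \<in> R \<Longrightarrow> 0 < cmod (x - c) \<Longrightarrow> cmod (x - c) < \<delta> \<Longrightarrow>
             \<bar>Re ((x - c) * cnj \<nu>)\<bar> < \<kappa> * cmod (x - c)"
  shows "sector c \<nu> \<kappa> \<delta> \<inter> R = {}" "sector c (- \<nu>) \<kappa> \<delta> \<inter> R = {}"
  using assms by (fastforce simp: sector_def)+

lemma connected_UN_sectors:
  assumes "connected J" "continuous_on J c" "continuous_on J \<nu>" "\<And>s. s \<in> J \<Longrightarrow> cmod (\<nu> s) = 1"
    and "0 \<le> \<kappa>" "\<kappa> < 1" "\<delta> > 0"
  shows "connected (\<Union>s\<in>J. sector (c s) (\<nu> s) \<kappa> \<delta>)"
proof -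
  define a where "a s = c s + of_real (\<delta> / 2) * \<nu> s" for s
  have a: "a s \<in> sector (c s) (\<nu> s) \<kappa> \<delta>" if "s \<in> J" for s
    unfolding a_def using axis_point_in_sector assms that by blast
  have "connected (a ` J)"
    unfolding a_def using assms by (intro connected_continuous_image continuous_intros)
  then have "connected (a ` J \<union> (\<Union>s\<in>J. sector (c s) (\<nu> s) \<kappa> \<delta>))"
    using a convex_connected[OF convex_sector[OF \<open>0 \<le> \<kappa>\<close>]] by (intro connected_Un_UN) auto
  moreover have "a ` J \<union> (\<Union>s\<in>J. sector (c s) (\<nu> s) \<kappa> \<delta>) = (\<Union>s\<in>J. sector (c s) (\<nu> s) \<kappa> \<delta>)"
    using a by blast
  ultimately show ?thesis by simp
qed

lemma connected_subset_one_side: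
  assumes "connected A" "A \<subseteq> U \<union> V" "open U" "open V" "U \<inter> V = {}"
  shows "A \<subseteq> U \<or> A \<subseteq> V"
  using connectedD[OF assms(1,3,4)] assms(2,5) by blast

lemma has_vector_derivative_within_Un:
  assumes "(f has_vector_derivative v) (at x within S)" "(f has_vector_derivative v) (at x within T)"
  shows "(f has_vector_derivative v) (at x within S \<union> T)"
  using assms unfolding has_vector_derivative_def has_derivative_within using Lim_within_Un by blast

lemma frac_eq_shift:
  fixes k :: int
  assumes "x \<in> {real_of_int k..real_of_int k + 1}" "H 0 = H 1"
  shows "H (frac x) = H (x - k)"
proof (cases "x = k + 1")
  case False
  then have "floor x = k" using assms by (intro floor_unique) auto
  then show ?thesis by (simp add: frac_def)
qed (use assms in \<open>simp add: frac_def\<close>)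

lemma frac_cell_has_vector_derivative:
  fixes \<gamma> \<gamma>' :: "real \<Rightarrow> complex" and k :: int
  assumes closed: "\<gamma> 0 = \<gamma> 1" "\<gamma>' 0 = \<gamma>' 1"
    and der: "\<forall>t\<in>{0..1}. (\<gamma> has_vector_derivative \<gamma>' t) (at t within {0..1})"
    and x: "x \<in> {real_of_int k..real_of_int k+1}"
  shows "((\<lambda>t. \<gamma> (frac t)) has_vector_derivative \<gamma>' (frac x)) (at x within {real_of_int k..real_of_int k+1})"
proof -
  have "(\<lambda>x. x - real_of_int k) ` {real_of_int k..real_of_int k+1} = {0..1}"
    using image_minus_const_atLeastAtMost'[of "real_of_int k" "real_of_int k" "real_of_int k + 1"]
    by simp
  moreover have "(\<gamma> has_vector_derivative \<gamma>' (x - k)) (at (x - k) within {0..1})"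
    using der x by auto
  ultimately have "((\<gamma> \<circ> (\<lambda>x. x - real_of_int k)) has_vector_derivative (1 *\<^sub>R \<gamma>' (x - k)))
      (at x within {real_of_int k..real_of_int k+1})"
    by (intro vector_diff_chain_within) (auto intro!: derivative_eq_intros)
  then have "((\<lambda>x. \<gamma> (x - k)) has_vector_derivative \<gamma>' (x - k)) (at x within {real_of_int k..real_of_int k+1})"
    by (simp add: o_def)
  moreover have "\<gamma> (frac y) = \<gamma> (y - k)" if "y \<in> {real_of_int k..real_of_int k+1}" for y
    using frac_eq_shift[OF that] closed by blast
  ultimately have "((\<lambda>t. \<gamma> (frac t)) has_vector_derivative \<gamma>' (x - k)) (at x within {real_of_int k..real_of_int k+1})"
    using has_vector_derivative_transform[where g="\<lambda>t. \<gamma> (frac t)" and f="\<lambda>y. \<gamma> (y - k)", OF x] by blast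
  then show ?thesis using frac_eq_shift[OF x, of \<gamma>'] closed by simp
qed

lemma frac_cell_continuous_on:
  fixes \<gamma>' :: "real \<Rightarrow> complex" and k :: int
  assumes "continuous_on {0..1} \<gamma>'" "\<gamma>' 0 = \<gamma>' 1"
  shows "continuous_on {real_of_int k..real_of_int k+1} (\<lambda>t. \<gamma>' (frac t))"
proof -
  have "continuous_on {real_of_int k..real_of_int k+1} (\<lambda>x. \<gamma>' (x - k))"
    by (rule continuous_on_compose2[OF assms(1)]) (auto intro!: continuous_intros)
  then show ?thesis
    by (rule continuous_on_eq) (metis frac_eq_shift assms(2))
qed

text \<open>The periodic extension \<open>t \<mapsto> \<gamma> (frac t)\<close> of a \<open>C\<^sup>1\<close> loop whose derivative also closes up
  is \<open>C\<^sup>1\<close> on the whole line; this removes the special role of the endpoint of the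
  parametrisation.\<close>

lemma periodic_extension_C1:
  fixes \<gamma> \<gamma>' :: "real \<Rightarrow> complex"
  assumes closed: "\<gamma> 0 = \<gamma> 1" "\<gamma>' 0 = \<gamma>' 1"
    and der: "\<forall>t\<in>{0..1}. (\<gamma> has_vector_derivative \<gamma>' t) (at t within {0..1})"
    and cont: "continuous_on {0..1} \<gamma>'"
  shows "((\<lambda>t. \<gamma> (frac t)) has_vector_derivative \<gamma>' (frac t)) (at t)"
    and "isCont (\<lambda>t. \<gamma>' (frac t)) t"
proof -
  let ?p = "\<lambda>t. \<gamma> (frac t)" and ?q = "\<lambda>t. \<gamma>' (frac t)"
  define k where "k = floor t"
  have fl: "real_of_int k \<le> t" "t < real_of_int k + 1" using k_def by linarith+
  have U: "{real_of_int (k-1)..real_of_int (k-1)+1} \<union> {real_of_int k..real_of_int k+1} =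
           {real_of_int k - 1..real_of_int k + 1}"
    by auto
  have int: "t \<in> interior {real_of_int k - 1..real_of_int k + 1}" using fl by simp
  note cell = frac_cell_has_vector_derivative[OF closed der]
  show "(?p has_vector_derivative ?q t) (at t)"
  proof (cases "t = k")
    case True
    have "(?p has_vector_derivative ?q t)
            (at t within {real_of_int (k-1)..real_of_int (k-1)+1} \<union> {real_of_int k..real_of_int k+1})"
      by (rule has_vector_derivative_within_Un; rule cell) (use True in auto)
    then show ?thesis unfolding U using at_within_interior[OF int] by simp
  next
    case False
    then have "t \<in> interior {real_of_int k..real_of_int k+1}" using fl by simp
    moreover have "(?p has_vector_derivative ?q t) (at t within {real_of_int k..real_of_int k+1})"
      by (rule cell) (use fl in simp)
    ultimately show ?thesis using at_within_interior by metis
  qed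
  have "continuous_on ({real_of_int (k-1)..real_of_int (k-1)+1} \<union> {real_of_int k..real_of_int k+1}) ?q"
    using frac_cell_continuous_on[OF cont closed(2), of "k - 1"] frac_cell_continuous_on[OF cont closed(2), of k]
    by (intro continuous_on_closed_Un) auto
  then show "isCont ?q t" unfolding U using continuous_on_interior[OF _ int] by blast
qed

locale periodic_regular_curve =
  fixes p q :: "real \<Rightarrow> complex"
  assumes has_derivative: "\<And>t. (p has_vector_derivative q t) (at t)"
    and isCont_derivative: "\<And>t. isCont q t"
    and derivative_nonzero: "\<And>t. q t \<noteq> 0"
    and periodic: "\<And>t (k::int). p (t + k) = p t"
    and injective_mod_1: "\<And>s t. p s = p t \<Longrightarrow> \<exists>k::int. t = s + k"
begin

lemma continuous_on_p: "continuous_on A p"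
  using has_derivative has_vector_derivative_continuous continuous_at_imp_continuous_on by blast

lemma continuous_on_q: "continuous_on A q"
  using isCont_derivative continuous_at_imp_continuous_on by blast

lemma range_eq_image_unit_interval: "range p = p ` {0..1}"
proof -
  have "p t \<in> p ` {0..1}" for t
    using periodic[of "frac t" "floor t"] frac_lt_1[of t] by (auto simp: frac_def)
  then show ?thesis by blast
qed

lemma compact_range: "compact (range p)"
  unfolding range_eq_image_unit_interval by (intro compact_continuous_image continuous_on_p) simp

lemma nearby_parameter:
  assumes "z \<in> range p"
  shows "\<exists>t. z = p t \<and> \<bar>t - s\<bar> \<le> 1/2"
proof -
  obtain t' where z: "z = p t'" using assms by blast
  define k where "k = \<lceil>s - t' - 1/2\<rceil>"
  have "s - t' - 1/2 \<le> k" "k < s - t' + 1/2" unfolding k_def by linarith+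
  then have "\<bar>(t' + k) - s\<bar> \<le> 1/2" by linarith
  then show ?thesis using z periodic[of t' k] by (intro exI[of _ "t' + k"]) auto
qed

lemma derivative_bounded_below: "\<exists>m>0. \<forall>t\<in>{a..b}. m \<le> cmod (q t)"
proof (cases "a \<le> b")
  case True
  have "continuous_on {a..b} (\<lambda>t. cmod (q t))" by (intro continuous_intros continuous_on_q)
  moreover have "{a..b} \<noteq> {}" using True by simp
  ultimately obtain t0 where "t0 \<in> {a..b}" "\<forall>y\<in>{a..b}. cmod (q t0) \<le> cmod (q y)"
    using continuous_attains_inf[OF compact_Icc] by blast
  then show ?thesis using derivative_nonzero[of t0] by (intro exI[of _ "cmod (q t0)"]) auto
next
  case False
  then show ?thesis by (intro exI[of _ 1]) auto
qed

lemma uniform_linearization: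
  assumes "\<epsilon> > 0"
  shows "\<exists>\<eta>>0. \<eta> \<le> 1/4 \<and> (\<forall>s t. s \<in> {T0-1..T0+1} \<and> \<bar>t-s\<bar> \<le> \<eta> \<longrightarrow>
           cmod (p t - p s - of_real (t-s) * q s) \<le> \<epsilon> * \<bar>t-s\<bar>)"
proof -
  have "uniformly_continuous_on {T0-2..T0+2} q" by (intro compact_uniformly_continuous continuous_on_q) simp
  then obtain d0 where "d0 > 0" and d0: "\<And>x x'. x \<in> {T0-2..T0+2} \<Longrightarrow> x' \<in> {T0-2..T0+2} \<Longrightarrow>
      dist x' x < d0 \<Longrightarrow> dist (q x') (q x) < \<epsilon>"
    unfolding uniformly_continuous_on_def using assms by metis
  define \<eta> where "\<eta> = min (d0/2) (1/4)"
  have \<eta>: "\<eta> > 0" "\<eta> \<le> 1/4" "\<eta> < d0" using \<open>d0 > 0\<close> by (auto simp: \<eta>_def)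
  have "cmod (p t - p s - of_real (t-s) * q s) \<le> \<epsilon> * \<bar>t-s\<bar>"
    if s: "s \<in> {T0-1..T0+1}" and ts: "\<bar>t-s\<bar> \<le> \<eta>" for s t
  proof -
    have seg: "closed_segment s t \<subseteq> {T0-2..T0+2}"
      using s ts \<eta> by (auto simp: closed_segment_eq_real_ivl)
    have "norm (p t - p s - (t - s) *\<^sub>R q s) \<le> norm (t - s) * \<epsilon>"
    proof (rule vector_differentiable_bound_linearization[of "closed_segment s t" p q])
      fix x assume x: "x \<in> closed_segment s t"
      have "norm (x - s) \<le> norm (t - s)" by (rule segment_bound1[OF x])
      then have "dist (q x) (q s) < \<epsilon>" using d0[of s x] seg x s ts \<eta> by (auto simp: dist_norm)
      then show "norm (q x - q s) \<le> \<epsilon>" by (simp add: dist_norm)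
    next
      show "\<And>x. x \<in> closed_segment s t \<Longrightarrow> (p has_vector_derivative q x) (at x within closed_segment s t)"
        using has_derivative has_vector_derivative_at_within by blast
    qed auto
    then show ?thesis by (simp add: scaleR_conv_of_real mult.commute)
  qed
  then show ?thesis using \<eta> by blast
qed

lemma separated_if_parameters_apart:
  assumes "\<eta> > 0" "\<eta> \<le> 1/2"
  shows "\<exists>d>0. \<forall>s\<in>{T0-1..T0+1}. \<forall>t. \<eta> \<le> \<bar>t - s\<bar> \<and> \<bar>t - s\<bar> \<le> 1/2 \<longrightarrow> d \<le> cmod (p t - p s)"
proof -
  define C where "C = {T0-1..T0+1} \<times> ({-1/2..-\<eta>} \<union> {\<eta>..1/2})"
  have "compact C" unfolding C_def by (intro compact_Times compact_Un) auto
  moreover have "C \<noteq> {}" using assms by (auto simp: C_def)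
  moreover have "continuous_on C (\<lambda>x. cmod (p (fst x + snd x) - p (fst x)))"
    by (intro continuous_intros continuous_on_compose2[OF continuous_on_p]) auto
  ultimately obtain x0 where x0: "x0 \<in> C"
    and min: "\<forall>y\<in>C. cmod (p (fst x0 + snd x0) - p (fst x0)) \<le> cmod (p (fst y + snd y) - p (fst y))"
    using continuous_attains_inf by blast
  define d where "d = cmod (p (fst x0 + snd x0) - p (fst x0))"
  have "d > 0"
  proof (rule ccontr)
    assume "\<not> d > 0"
    then obtain k :: int where "fst x0 + snd x0 = fst x0 + k"
      using injective_mod_1[of "fst x0" "fst x0 + snd x0"] by (auto simp: d_def)
    moreover have "\<eta> \<le> \<bar>snd x0\<bar>" "\<bar>snd x0\<bar> \<le> 1/2" using x0 assms by (auto simp: C_def)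
    ultimately have "\<eta> \<le> real_of_int \<bar>k\<bar>" "real_of_int \<bar>k\<bar> < 1" by auto
    then show False using \<open>\<eta> > 0\<close> by simp
  qed
  moreover have "d \<le> cmod (p t - p s)"
    if "s \<in> {T0-1..T0+1}" "\<eta> \<le> \<bar>t - s\<bar>" "\<bar>t - s\<bar> \<le> 1/2" for s t
  proof -
    have "(s, t - s) \<in> C" using that by (auto simp: C_def abs_if split: if_splits)
    then show ?thesis using min by (force simp: d_def)
  qed
  ultimately show ?thesis by blast
qed

lemma close_points_close_parameters:
  assumes "\<eta> > 0" "\<eta> \<le> 1/2"
  shows "\<exists>d>0. \<forall>s\<in>{T0-1..T0+1}. \<forall>x\<in>range p. cmod (x - p s) < d \<longrightarrow> (\<exists>t. x = p t \<and> \<bar>t - s\<bar> < \<eta>)"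
proof -
  obtain d where "d > 0"
    and d: "\<forall>s\<in>{T0-1..T0+1}. \<forall>t. \<eta> \<le> \<bar>t - s\<bar> \<and> \<bar>t - s\<bar> \<le> 1/2 \<longrightarrow> d \<le> cmod (p t - p s)"
    using separated_if_parameters_apart[OF assms] by blast
  have "\<exists>t. x = p t \<and> \<bar>t - s\<bar> < \<eta>"
    if "s \<in> {T0-1..T0+1}" "x \<in> range p" "cmod (x - p s) < d" for s x
  proof -
    obtain t where t: "x = p t" "\<bar>t - s\<bar> \<le> 1/2" using nearby_parameter[OF \<open>x \<in> range p\<close>] by blast
    have "\<not> \<eta> \<le> \<bar>t - s\<bar>"
    proof
      assume "\<eta> \<le> \<bar>t - s\<bar>"
      then have "d \<le> cmod (p t - p s)" using d that(1) t(2) by blast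
      then show False using that(3) t(1) by simp
    qed
    then show ?thesis using t by auto
  qed
  then show ?thesis using \<open>d > 0\<close> by blast
qed

definition unit_tangent :: "real \<Rightarrow> complex" where
  "unit_tangent s = q s / of_real (cmod (q s))"

definition unit_normal :: "real \<Rightarrow> complex" where
  "unit_normal s = \<i> * unit_tangent s"

lemma norm_unit_tangent: "cmod (unit_tangent s) = 1"
  using derivative_nonzero[of s] by (simp add: unit_tangent_def norm_divide)

lemma norm_unit_normal: "cmod (unit_normal s) = 1"
  by (simp add: unit_normal_def norm_mult norm_unit_tangent)

lemma unit_tangent_times_cnj: "unit_tangent s * cnj (unit_tangent s) = 1"
  using norm_unit_tangent[of s] by (simp add: complex_norm_square[symmetric])

lemma continuous_on_unit_normal: "continuous_on A unit_normal"
  unfolding unit_normal_def unit_tangent_def using derivative_nonzero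
  by (intro continuous_intros continuous_on_q) auto

lemma Re_tangent_times_normal: "Re (of_real a * q s * cnj (unit_normal s)) = 0"
proof -
  have "of_real a * q s * cnj (unit_normal s) = of_real a * (q s * cnj (q s)) * (- \<i>) / of_real (cmod (q s))"
    by (simp add: unit_normal_def unit_tangent_def)
  also have "\<dots> = of_real a * of_real ((cmod (q s))\<^sup>2) * (- \<i>) / of_real (cmod (q s))"
    by (simp only: complex_norm_square)
  also have "\<dots> = of_real (a * (cmod (q s))\<^sup>2 / cmod (q s)) * (- \<i>)"
    by simp
  finally show ?thesis by simp
qed

lemma norm_normal_component:
  "cmod (y - of_real (Re (y * cnj (unit_tangent s))) * unit_tangent s) = \<bar>Re (y * cnj (unit_normal s))\<bar>"
proof -
  define z where "z = y * cnj (unit_tangent s)"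
  have y: "y = z * unit_tangent s"
    using unit_tangent_times_cnj[of s] by (simp add: z_def mult.assoc mult.commute)
  have "z - of_real (Re z) = \<i> * of_real (Im z)" by (simp add: complex_eq_iff)
  moreover have "y - of_real (Re z) * unit_tangent s = (z - of_real (Re z)) * unit_tangent s"
    using y by (simp add: algebra_simps)
  ultimately have "cmod (y - of_real (Re z) * unit_tangent s) = \<bar>Im z\<bar>"
    by (simp add: norm_mult norm_unit_tangent)
  moreover have "Re (y * cnj (unit_normal s)) = Im z" by (simp add: unit_normal_def z_def)
  ultimately show ?thesis by (simp add: z_def)
qed

lemma chord_almost_tangent:
  assumes "0 < \<kappa>" "\<kappa> \<le> 1" and m: "0 < m" "m \<le> cmod (q s)"
    and lin: "cmod (p t - p s - of_real (t - s) * q s) \<le> \<kappa> * m / 4 * \<bar>t - s\<bar>"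
    and "p t \<noteq> p s"
  shows "\<bar>Re ((p t - p s) * cnj (unit_normal s))\<bar> < \<kappa> * cmod (p t - p s)"
proof -
  define \<epsilon> where "\<epsilon> = \<kappa> * m / 4"
  define w where "w = p t - p s - of_real (t - s) * q s"
  have "\<epsilon> > 0" using assms by (simp add: \<epsilon>_def)
  have "t \<noteq> s" using \<open>p t \<noteq> p s\<close> by auto
  have "Re ((p t - p s) * cnj (unit_normal s)) = Re (w * cnj (unit_normal s))"
    using Re_tangent_times_normal[of "t - s" s] by (simp add: w_def algebra_simps)
  then have R: "\<bar>Re ((p t - p s) * cnj (unit_normal s))\<bar> \<le> \<epsilon> * \<bar>t - s\<bar>"
    using abs_Re_le_cmod[of "w * cnj (unit_normal s)"] lin
    by (simp add: norm_mult norm_unit_normal w_def \<epsilon>_def)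
  have "cmod (of_real (t - s) * q s) = \<bar>t - s\<bar> * cmod (q s)" by (simp only: norm_mult norm_of_real)
  then have "\<bar>t - s\<bar> * m \<le> cmod (of_real (t - s) * q s)"
    using m by (simp add: mult_left_mono)
  also have "\<dots> \<le> cmod (p t - p s) + cmod w"
    using norm_triangle_ineq4[of "p t - p s" w] by (simp add: w_def)
  finally have "\<bar>t - s\<bar> * (m - \<epsilon>) \<le> cmod (p t - p s)"
    using lin by (simp add: w_def \<epsilon>_def algebra_simps)
  have "\<epsilon> < \<kappa> * (m - \<epsilon>)"
  proof -
    have "\<kappa> * \<epsilon> \<le> \<epsilon>" using assms \<open>\<epsilon> > 0\<close> by (simp add: mult_le_cancel_right1)
    then show ?thesis using \<open>\<epsilon> > 0\<close> by (simp add: \<epsilon>_def right_diff_distrib)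
  qed
  have "\<epsilon> * \<bar>t - s\<bar> < \<kappa> * (m - \<epsilon>) * \<bar>t - s\<bar>"
    using \<open>\<epsilon> < \<kappa> * (m - \<epsilon>)\<close> \<open>t \<noteq> s\<close> by (simp add: mult_strict_right_mono)
  also have "\<dots> = \<kappa> * (\<bar>t - s\<bar> * (m - \<epsilon>))" by (simp add: algebra_simps)
  also have "\<dots> \<le> \<kappa> * cmod (p t - p s)"
    using \<open>\<bar>t - s\<bar> * (m - \<epsilon>) \<le> cmod (p t - p s)\<close> \<open>0 < \<kappa>\<close> by (simp add: mult_left_mono)
  finally show ?thesis using R by linarith
qed

lemma locally_flat:
  assumes m: "m > 0" "\<forall>t\<in>{T0-1..T0+1}. m \<le> cmod (q t)" and \<kappa>: "0 < \<kappa>" "\<kappa> \<le> 1"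
  shows "\<exists>\<delta> \<eta>. \<delta> > 0 \<and> \<eta> > 0 \<and> \<eta> \<le> 1/4 \<and> \<delta> \<le> m * \<eta> / 2
     \<and> (\<forall>s t. s \<in> {T0-1..T0+1} \<and> \<bar>t-s\<bar> \<le> \<eta> \<longrightarrow>
           cmod (p t - p s - of_real (t-s) * q s) \<le> (\<kappa> * m / 4) * \<bar>t-s\<bar>)
     \<and> (\<forall>s\<in>{T0-1..T0+1}. \<forall>x\<in>range p. cmod (x - p s) < \<delta> \<longrightarrow> (\<exists>t. x = p t \<and> \<bar>t - s\<bar> < \<eta>))
     \<and> (\<forall>s\<in>{T0-1..T0+1}. \<forall>x\<in>range p. 0 < cmod (x - p s) \<and> cmod (x - p s) < \<delta> \<longrightarrow>
           \<bar>Re ((x - p s) * cnj (unit_normal s))\<bar> < \<kappa> * cmod (x - p s))"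
proof -
  obtain \<eta> where \<eta>: "\<eta> > 0" "\<eta> \<le> 1/4"
    and lin: "\<forall>s t. s \<in> {T0-1..T0+1} \<and> \<bar>t-s\<bar> \<le> \<eta> \<longrightarrow>
                cmod (p t - p s - of_real (t-s) * q s) \<le> (\<kappa> * m / 4) * \<bar>t-s\<bar>"
    using uniform_linearization[of "\<kappa> * m / 4" T0] m \<kappa> by auto
  obtain d where "d > 0"
    and close: "\<forall>s\<in>{T0-1..T0+1}. \<forall>x\<in>range p. cmod (x - p s) < d \<longrightarrow> (\<exists>t. x = p t \<and> \<bar>t - s\<bar> < \<eta>)"
    using close_points_close_parameters[of \<eta> T0] \<eta> by auto
  define \<delta> where "\<delta> = min d (m * \<eta> / 2)"
  have \<delta>: "\<delta> > 0" "\<delta> \<le> d" "\<delta> \<le> m * \<eta> / 2" using \<open>d > 0\<close> m \<eta> by (auto simp: \<delta>_def)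
  have "\<bar>Re ((x - p s) * cnj (unit_normal s))\<bar> < \<kappa> * cmod (x - p s)"
    if s: "s \<in> {T0-1..T0+1}" and x: "x \<in> range p" "0 < cmod (x - p s)" "cmod (x - p s) < \<delta>" for s x
  proof -
    obtain t where t: "x = p t" "\<bar>t - s\<bar> < \<eta>" using close s x \<delta> by force
    show ?thesis
      unfolding t(1)
      by (rule chord_almost_tangent[of \<kappa> m]) (use \<kappa> m s t lin x in auto)
  qed
  moreover have "\<forall>s\<in>{T0-1..T0+1}. \<forall>x\<in>range p. cmod (x - p s) < \<delta> \<longrightarrow> (\<exists>t. x = p t \<and> \<bar>t - s\<bar> < \<eta>)"
    using close \<delta> by force
  ultimately show ?thesis using \<delta> \<eta> lin by blast
qed

text \<open>If \<open>p s\<close> is a nearest point of the curve to \<open>x\<close>, then \<open>x - p s\<close> cannot be close to the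
  tangent direction: otherwise moving the parameter along the tangent would bring the curve
  closer to \<open>x\<close>.\<close>

lemma nearest_point_normal_direction:
  assumes m: "0 < m" "m \<le> cmod (q s)"
    and lin: "\<And>t. \<bar>t - s\<bar> \<le> \<eta> \<Longrightarrow> cmod (p t - p s - of_real (t - s) * q s) \<le> m / 16 * \<bar>t - s\<bar>"
    and nearest: "\<And>y. y \<in> range p \<Longrightarrow> cmod (x - p s) \<le> cmod (x - y)"
    and "x \<noteq> p s" and close: "cmod (x - p s) \<le> m * \<eta>"
  shows "cmod (x - p s) / 4 < \<bar>Re ((x - p s) * cnj (unit_normal s))\<bar>"
proof (rule ccontr)
  define y r where "y = x - p s" and "r = cmod (x - p s)"
  assume "\<not> ?thesis"
  then have small: "\<bar>Re (y * cnj (unit_normal s))\<bar> \<le> r / 4" by (simp add: y_def r_def)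
  have "r > 0" using \<open>x \<noteq> p s\<close> by (simp add: r_def)
  define \<alpha> where "\<alpha> = Re (y * cnj (unit_tangent s))"
  define t where "t = s + \<alpha> / cmod (q s)"
  have "\<bar>\<alpha>\<bar> \<le> r"
    using abs_Re_le_cmod[of "y * cnj (unit_tangent s)"] by (simp add: \<alpha>_def r_def y_def norm_mult norm_unit_tangent)
  have "\<bar>t - s\<bar> = \<bar>\<alpha>\<bar> / cmod (q s)" by (simp add: t_def)
  also have "\<dots> \<le> r / m"
    using \<open>\<bar>\<alpha>\<bar> \<le> r\<close> m by (intro frac_le) auto
  finally have ts: "\<bar>t - s\<bar> \<le> r / m" .
  also have "\<dots> \<le> \<eta>" using close m by (simp add: r_def divide_le_eq mult.commute)
  finally have "cmod (p t - p s - of_real (t - s) * q s) \<le> m / 16 * \<bar>t - s\<bar>" by (rule lin)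
  also have "\<dots> \<le> m / 16 * (r / m)" using ts m by (intro mult_left_mono) auto
  finally have err: "cmod (p t - p s - of_real (t - s) * q s) \<le> r / 16" using m by simp
  have "of_real (t - s) * q s = of_real \<alpha> * unit_tangent s"
    using derivative_nonzero[of s] by (simp add: t_def unit_tangent_def)
  then have "x - p t = (y - of_real \<alpha> * unit_tangent s) - (p t - p s - of_real (t - s) * q s)"
    by (simp add: y_def)
  then have "cmod (x - p t) \<le> cmod (y - of_real \<alpha> * unit_tangent s) + cmod (p t - p s - of_real (t - s) * q s)"
    by (metis norm_triangle_ineq4)
  also have "cmod (y - of_real \<alpha> * unit_tangent s) = \<bar>Re (y * cnj (unit_normal s))\<bar>"
    unfolding \<alpha>_def by (rule norm_normal_component)
  finally have "cmod (x - p t) < r" using small err \<open>r > 0\<close> by linarith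
  then show False using nearest[of "p t"] by (simp add: r_def)
qed

lemma normal_sectors_near_point:
  "\<exists>\<delta> \<eta>. \<delta> > 0 \<and> \<eta> > 0 \<and>
     (\<forall>s. \<bar>s - T0\<bar> \<le> \<eta> \<longrightarrow> sector (p s) (unit_normal s) (1/4) \<delta> \<inter> range p = {} \<and>
                              sector (p s) (- unit_normal s) (1/4) \<delta> \<inter> range p = {}) \<and>
     (\<forall>x. cmod (x - p T0) < \<delta> / 3 \<longrightarrow> x \<notin> range p \<longrightarrow>
        (\<exists>s. \<bar>s - T0\<bar> \<le> \<eta> \<and> (x \<in> sector (p s) (unit_normal s) (1/4) \<delta> \<or>
                               x \<in> sector (p s) (- unit_normal s) (1/4) \<delta>)))"
proof -
  obtain m where m: "m > 0" "\<forall>t\<in>{T0-1..T0+1}. m \<le> cmod (q t)"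
    using derivative_bounded_below by blast
  obtain \<delta> \<eta> where "\<delta> > 0" "\<eta> > 0" "\<eta> \<le> 1/4" "\<delta> \<le> m * \<eta> / 2"
    and lin: "\<forall>s t. s \<in> {T0-1..T0+1} \<and> \<bar>t-s\<bar> \<le> \<eta> \<longrightarrow>
                cmod (p t - p s - of_real (t-s) * q s) \<le> (1/4 * m / 4) * \<bar>t-s\<bar>"
    and close: "\<forall>s\<in>{T0-1..T0+1}. \<forall>x\<in>range p. cmod (x - p s) < \<delta> \<longrightarrow> (\<exists>t. x = p t \<and> \<bar>t - s\<bar> < \<eta>)"
    and flat: "\<forall>s\<in>{T0-1..T0+1}. \<forall>x\<in>range p. 0 < cmod (x - p s) \<and> cmod (x - p s) < \<delta> \<longrightarrow>
                 \<bar>Re ((x - p s) * cnj (unit_normal s))\<bar> < 1/4 * cmod (x - p s)"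
    using locally_flat[of m T0 "1/4"] m by auto
  have near_T0: "s \<in> {T0-1..T0+1}" if "\<bar>s - T0\<bar> \<le> \<eta>" for s
    using that \<open>\<eta> \<le> 1/4\<close> by auto
  have disjoint: "sector (p s) (unit_normal s) (1/4) \<delta> \<inter> range p = {} \<and>
                  sector (p s) (- unit_normal s) (1/4) \<delta> \<inter> range p = {}" if "\<bar>s - T0\<bar> \<le> \<eta>" for s
    using sector_disjoint_if_flat[of "range p" "p s" \<delta> "unit_normal s" "1/4"] flat near_T0[OF that] by blast
  have cover: "\<exists>s. \<bar>s - T0\<bar> \<le> \<eta> \<and> (x \<in> sector (p s) (unit_normal s) (1/4) \<delta> \<or>
                                     x \<in> sector (p s) (- unit_normal s) (1/4) \<delta>)"
    if x: "cmod (x - p T0) < \<delta> / 3" "x \<notin> range p" for x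
  proof -
    obtain z where z: "z \<in> range p" and nearest: "\<And>y. y \<in> range p \<Longrightarrow> dist x z \<le> dist x y"
      using distance_attains_inf[of "range p" x] compact_range compact_imp_closed by blast
    have "cmod (x - z) < \<delta> / 3" using nearest[of "p T0"] x by (simp add: dist_norm)
    then have "cmod (z - p T0) < \<delta>"
      using x norm_triangle_ineq4[of "z - x" "p T0 - x"] \<open>\<delta> > 0\<close> by (simp add: norm_minus_commute)
    then obtain s where s: "z = p s" "\<bar>s - T0\<bar> < \<eta>" using close z by fastforce
    have "cmod (x - p s) / 4 < \<bar>Re ((x - p s) * cnj (unit_normal s))\<bar>"
    proof (rule nearest_point_normal_direction[of m])
      show "m \<le> cmod (q s)" using m near_T0[of s] s by auto
      show "cmod (p t - p s - of_real (t - s) * q s) \<le> m / 16 * \<bar>t - s\<bar>" if "\<bar>t - s\<bar> \<le> \<eta>" for t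
        using lin near_T0[of s] s that by auto
      show "cmod (x - p s) \<le> cmod (x - y)" if "y \<in> range p" for y
        using nearest[OF that] s by (simp add: dist_norm)
      show "x \<noteq> p s" using x by auto
      show "cmod (x - p s) \<le> m * \<eta>"
        using \<open>cmod (x - z) < \<delta> / 3\<close> s \<open>\<delta> \<le> m * \<eta> / 2\<close> \<open>\<delta> > 0\<close> by simp
    qed (use m in simp)
    moreover have "cmod (x - p s) < \<delta>" using \<open>cmod (x - z) < \<delta> / 3\<close> s \<open>\<delta> > 0\<close> by simp
    ultimately show ?thesis
      using s by (intro exI[of _ s]) (auto simp: sector_def abs_if split: if_splits)
  qed
  show ?thesis using \<open>\<delta> > 0\<close> \<open>\<eta> > 0\<close> disjoint cover by blast
qed

lemma two_sided_normal_sectors: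
  assumes "open U" "open V" "U \<inter> V = {}" "U \<union> V = - range p"
    and "p T0 \<in> closure U" "p T0 \<in> closure V"
  shows "\<exists>\<nu> \<delta>. cmod \<nu> = 1 \<and> \<delta> > 0 \<and> sector (p T0) \<nu> (1/4) \<delta> \<subseteq> U \<and> sector (p T0) (- \<nu>) (1/4) \<delta> \<subseteq> V"
proof -
  obtain \<delta> \<eta> where "\<delta> > 0" "\<eta> > 0"
    and disjoint: "\<And>s. \<bar>s - T0\<bar> \<le> \<eta> \<Longrightarrow> sector (p s) (unit_normal s) (1/4) \<delta> \<inter> range p = {} \<and>
                              sector (p s) (- unit_normal s) (1/4) \<delta> \<inter> range p = {}"
    and cover: "\<And>x. cmod (x - p T0) < \<delta> / 3 \<Longrightarrow> x \<notin> range p \<Longrightarrow>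
        \<exists>s. \<bar>s - T0\<bar> \<le> \<eta> \<and> (x \<in> sector (p s) (unit_normal s) (1/4) \<delta> \<or>
                            x \<in> sector (p s) (- unit_normal s) (1/4) \<delta>)"
    using normal_sectors_near_point by metis
  define J where "J = {T0 - \<eta>..T0 + \<eta>}"
  define A where "A \<sigma> = (\<Union>s\<in>J. sector (p s) (\<sigma> * unit_normal s) (1/4) \<delta>)" for \<sigma> :: complex
  have "J \<noteq> {}" "\<And>s. s \<in> J \<longleftrightarrow> \<bar>s - T0\<bar> \<le> \<eta>" using \<open>\<eta> > 0\<close> by (auto simp: J_def)
  have one_side: "A \<sigma> \<subseteq> U \<or> A \<sigma> \<subseteq> V" if "\<sigma> = 1 \<or> \<sigma> = -1" for \<sigma>
  proof (rule connected_subset_one_side)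
    show "connected (A \<sigma>)"
      unfolding A_def using that \<open>\<delta> > 0\<close>
      by (intro connected_UN_sectors continuous_intros continuous_on_p continuous_on_unit_normal)
         (auto simp: J_def norm_mult norm_unit_normal)
    show "A \<sigma> \<subseteq> U \<union> V"
      using disjoint that \<open>U \<union> V = - range p\<close> \<open>\<And>s. s \<in> J \<longleftrightarrow> \<bar>s - T0\<bar> \<le> \<eta>\<close> by (fastforce simp: A_def)
  qed (use assms in auto)
  text \<open>Points of \<open>U\<close> and of \<open>V\<close> close to \<open>p T0\<close> both lie in \<open>A 1 \<union> A (-1)\<close>, so the two
    unions are on different sides.\<close>
  have "x \<in> A 1 \<union> A (-1)" if "x \<in> U \<union> V" "dist x (p T0) < \<delta> / 3" for x
    using cover[of x] that \<open>U \<union> V = - range p\<close> \<open>\<And>s. s \<in> J \<longleftrightarrow> \<bar>s - T0\<bar> \<le> \<eta>\<close>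
    by (force simp: A_def dist_norm)
  moreover obtain xI xO where "xI \<in> U" "dist xI (p T0) < \<delta> / 3" "xO \<in> V" "dist xO (p T0) < \<delta> / 3"
    using assms(5,6) \<open>\<delta> > 0\<close> unfolding closure_approachable by (meson divide_pos_pos zero_less_numeral)
  ultimately have sides: "(A 1 \<subseteq> U \<and> A (-1) \<subseteq> V) \<or> (A 1 \<subseteq> V \<and> A (-1) \<subseteq> U)"
    using one_side[of 1] one_side[of "-1"] \<open>U \<inter> V = {}\<close> by blast
  obtain \<sigma> where "\<sigma> = 1 \<or> \<sigma> = -1" "A \<sigma> \<subseteq> U" "A (- \<sigma>) \<subseteq> V"
  proof (cases "A 1 \<subseteq> U \<and> A (-1) \<subseteq> V")
    case False
    then show ?thesis using sides that[of "-1"] by auto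
  qed (use that[of 1] in simp)
  moreover have "sector (p T0) (\<sigma> * unit_normal T0) (1/4) \<delta> \<subseteq> A \<sigma>" for \<sigma>
    using \<open>\<eta> > 0\<close> unfolding A_def J_def by (intro UN_upper) auto
  ultimately have "sector (p T0) (\<sigma> * unit_normal T0) (1/4) \<delta> \<subseteq> U"
    "sector (p T0) (- (\<sigma> * unit_normal T0)) (1/4) \<delta> \<subseteq> V"
    by (metis order_trans, metis minus_mult_left order_trans)
  moreover have "cmod (\<sigma> * unit_normal T0) = 1"
    using \<open>\<sigma> = 1 \<or> \<sigma> = -1\<close> by (auto simp: norm_mult norm_unit_normal)
  ultimately show ?thesis using \<open>\<delta> > 0\<close> by blast
qed

end

lemma smooth_jordan_curve_periodic_parametrization:
  assumes "smooth_jordan_curve S"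
  shows "\<exists>p q. periodic_regular_curve p q \<and> range p = S"
proof -
  obtain \<gamma> \<gamma>' where "simple_path \<gamma>" and cl: "pathfinish \<gamma> = pathstart \<gamma>" and im: "path_image \<gamma> = S"
    and der: "\<forall>t\<in>{0..1}. (\<gamma> has_vector_derivative \<gamma>' t) (at t within {0..1}) \<and> \<gamma>' t \<noteq> 0"
    and cont: "continuous_on {0..1} \<gamma>'" and "\<gamma>' 0 = \<gamma>' 1"
    using assms unfolding smooth_jordan_curve_def by blast
  have "\<gamma> 0 = \<gamma> 1" using cl by (simp add: pathfinish_def pathstart_def)
  define p where "p t = \<gamma> (frac t)" for t
  define q where "q t = \<gamma>' (frac t)" for t
  have frac01: "frac t \<in> {0..1}" for t :: real using frac_lt_1[of t] by simp
  have "periodic_regular_curve p q"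
  proof
    show "(p has_vector_derivative q t) (at t)" "isCont q t" for t
      unfolding p_def q_def using periodic_extension_C1[OF \<open>\<gamma> 0 = \<gamma> 1\<close> \<open>\<gamma>' 0 = \<gamma>' 1\<close> _ cont] der
      by auto
    show "q t \<noteq> 0" for t unfolding q_def using der frac01 by blast
    show "p (t + real_of_int k) = p t" for t k by (simp add: p_def frac_def)
    show "\<exists>k::int. t = s + k" if "p s = p t" for s t
    proof -
      have "loop_free \<gamma>" using \<open>simple_path \<gamma>\<close> by (simp add: simple_path_def)
      then have "frac s = frac t \<or> frac s = 0 \<and> frac t = 1 \<or> frac s = 1 \<and> frac t = 0"
        using that frac01 unfolding loop_free_def p_def by blast
      then have "frac s = frac t" using frac_lt_1 by (metis less_irrefl)
      then have "t = s + (floor t - floor s)" by (simp add: frac_def)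
      then show ?thesis by blast
    qed
  qed
  moreover have "range p = S"
  proof -
    have "\<gamma> t \<in> range p" if "t \<in> {0..1}" for t
      using that \<open>\<gamma> 0 = \<gamma> 1\<close> frac_eq[of t] unfolding p_def
      by (cases "t = 1") (auto intro: image_eqI[of _ _ 0] image_eqI[of _ _ t])
    then show ?thesis using frac01 im by (auto simp: path_image_def p_def)
  qed
  ultimately show ?thesis by blast
qed

lemma smooth_jordan_curve_inside_outside:
  assumes "smooth_jordan_curve S"
  shows "open (inside S)" "open (outside S)" "inside S \<inter> outside S = {}" "inside S \<union> outside S = - S"
    "frontier (inside S) = S" "frontier (outside S) = S" "bounded S"
proof -
  obtain \<gamma> where "simple_path \<gamma>" "pathfinish \<gamma> = pathstart \<gamma>" "path_image \<gamma> = S"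
    using assms unfolding smooth_jordan_curve_def by blast
  then show "open (inside S)" "open (outside S)" "inside S \<inter> outside S = {}" "inside S \<union> outside S = - S"
    "frontier (inside S) = S" "frontier (outside S) = S" "bounded S"
    using Jordan_inside_outside[of \<gamma>] compact_path_image[OF simple_path_imp_path] compact_imp_bounded
    by auto
qed

lemma smooth_jordan_curve_normal_sectors:
  assumes "smooth_jordan_curve S" "z0 \<in> S"
  shows "\<exists>\<nu> \<delta>. cmod \<nu> = 1 \<and> \<delta> > 0 \<and>
           sector z0 \<nu> (1/4) \<delta> \<subseteq> inside S \<and> sector z0 (- \<nu>) (1/4) \<delta> \<subseteq> outside S"
proof -
  obtain p q where "periodic_regular_curve p q" "range p = S"
    using smooth_jordan_curve_periodic_parametrization[OF assms(1)] by blast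
  then interpret periodic_regular_curve p q by simp
  obtain T0 where "z0 = p T0" using assms(2) \<open>range p = S\<close> by blast
  note J = smooth_jordan_curve_inside_outside[OF assms(1)]
  then have "p T0 \<in> closure (inside S)" "p T0 \<in> closure (outside S)"
    using assms(2) \<open>z0 = p T0\<close> frontier_def by auto
  then show ?thesis
    using two_sided_normal_sectors[of "inside S" "outside S" T0] J \<open>range p = S\<close> \<open>z0 = p T0\<close> by simp
qed

section \<open>Zeros of higher order map sectors into sectors\<close>

lemma cos_ge_half: "\<bar>\<theta>\<bar> \<le> pi / 3 \<Longrightarrow> 1/2 \<le> cos \<theta>"
  using cos_monotone_0_pi_le[of "\<bar>\<theta>\<bar>" "pi / 3"] by (simp add: cos_60)

text \<open>Turning \<open>u\<close> by an angle \<open>\<phi>\<close> turns \<open>u ^ m\<close> by \<open>m \<phi>\<close>; as \<open>m \<ge> 2\<close>, a turn of \<open>u\<close> by at most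
  \<open>\<pi>/3\<close> turns \<open>u ^ m\<close> by two thirds of any angle in \<open>(-\<pi>, \<pi>]\<close>.\<close>

lemma exists_direction_aligned_with_power:
  fixes \<nu> \<mu> c :: complex and m :: nat
  assumes m: "m \<ge> 2" and "cmod \<nu> = 1" "cmod \<mu> = 1" "c \<noteq> 0"
  shows "\<exists>u. cmod u = 1 \<and> 1/2 \<le> Re (u * cnj \<nu>) \<and> cmod c / 2 \<le> Re (u ^ m * c * cnj \<mu>)"
proof -
  define \<zeta> where "\<zeta> = \<nu> ^ m * c * cnj \<mu> / of_real (cmod c)"
  have "cmod \<zeta> = 1" using assms by (simp add: \<zeta>_def norm_mult norm_divide norm_power)
  define x where "x = Arg (cnj \<zeta>)"
  have x: "- pi < x" "x \<le> pi" using Arg_bounded[of "cnj \<zeta>"] by (auto simp: x_def)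
  have "cis x = cnj \<zeta>"
    using cis_Arg[of "cnj \<zeta>"] \<open>cmod \<zeta> = 1\<close> by (force simp: x_def sgn_eq)
  then have \<zeta>: "\<zeta> = cis (- x)" by (metis cis_cnj complex_cnj_cnj)
  define \<phi> where "\<phi> = 2 * x / (3 * m)"
  define u where "u = \<nu> * cis \<phi>"
  have "\<nu> * cnj \<nu> = 1" using assms by (simp add: complex_norm_square[symmetric])
  then have "u * cnj \<nu> = cis \<phi>" by (simp add: u_def algebra_simps)
  moreover have "\<bar>\<phi>\<bar> \<le> pi / 3"
  proof -
    have "\<bar>\<phi>\<bar> = 2 * \<bar>x\<bar> / (3 * m)" using m by (simp add: \<phi>_def abs_divide abs_mult)
    also have "\<dots> \<le> 2 * pi / (3 * 2)" by (rule frac_le) (use x m in auto)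
    finally show ?thesis by simp
  qed
  ultimately have "1/2 \<le> Re (u * cnj \<nu>)" using cos_ge_half by simp
  have "u ^ m * c * cnj \<mu> = \<zeta> * cis (real m * \<phi>) * of_real (cmod c)"
    using assms by (simp add: u_def \<zeta>_def power_mult_distrib Complex.DeMoivre)
  also have "\<zeta> * cis (real m * \<phi>) = cis (- (x / 3))"
    using m by (simp add: \<zeta> \<phi>_def cis_mult)
  finally have "Re (u ^ m * c * cnj \<mu>) = cos (x / 3) * cmod c" by simp
  moreover have "1/2 \<le> cos (x / 3)" using x by (intro cos_ge_half) simp
  then have "1/2 * cmod c \<le> cos (x / 3) * cmod c" by (rule mult_right_mono) simp
  ultimately have "cmod c / 2 \<le> Re (u ^ m * c * cnj \<mu>)" by simp
  moreover have "cmod u = 1" using assms by (simp add: u_def norm_mult)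
  ultimately show ?thesis using \<open>1/2 \<le> Re (u * cnj \<nu>)\<close> by blast
qed

lemma perturbed_power_in_sector:
  assumes u: "cmod u = 1" and "cmod \<mu> = 1" and aligned: "cmod c / 2 \<le> Re (u ^ k * c * cnj \<mu>)"
    and a: "cmod (a - c) < cmod c / 8" and "s > 0"
  shows "1/4 * cmod (of_real s * (u ^ k * a)) < Re (of_real s * (u ^ k * a) * cnj \<mu>)"
    and "cmod (of_real s * (u ^ k * a)) \<le> s * (9/8 * cmod c)"
proof -
  have norm: "cmod (of_real s * (u ^ k * a)) = s * cmod a"
    using u \<open>s > 0\<close> by (simp add: norm_mult norm_power)
  have "cmod a \<le> 9/8 * cmod c" using a norm_triangle_ineq2[of a c] by linarith
  then show "cmod (of_real s * (u ^ k * a)) \<le> s * (9/8 * cmod c)"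
    unfolding norm using \<open>s > 0\<close> by (simp add: mult_left_mono)
  have "\<bar>Re (u ^ k * (a - c) * cnj \<mu>)\<bar> \<le> cmod (a - c)"
    using abs_Re_le_cmod[of "u ^ k * (a - c) * cnj \<mu>"] u \<open>cmod \<mu> = 1\<close> by (simp add: norm_mult norm_power)
  then have "3/8 * cmod c \<le> Re (u ^ k * a * cnj \<mu>)"
    using aligned a by (simp add: algebra_simps)
  have "1/4 * cmod (of_real s * (u ^ k * a)) = s * (1/4 * cmod a)" using norm by simp
  also have "\<dots> < s * (3/8 * cmod c)"
  proof -
    have "1/4 * cmod a < 3/8 * cmod c"
      using \<open>cmod a \<le> 9/8 * cmod c\<close> a norm_ge_zero[of "a - c"] by linarith
    then show ?thesis using \<open>s > 0\<close> by simp
  qed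
  also have "\<dots> \<le> s * Re (u ^ k * a * cnj \<mu>)"
    using \<open>3/8 * cmod c \<le> Re (u ^ k * a * cnj \<mu>)\<close> \<open>s > 0\<close> by simp
  also have "\<dots> = Re (of_real s * (u ^ k * a) * cnj \<mu>)"
    by (simp only: mult.assoc) simp
  finally show "1/4 * cmod (of_real s * (u ^ k * a)) < Re (of_real s * (u ^ k * a) * cnj \<mu>)" .
qed

lemma zero_of_order_ge_2_maps_sector_into_sector:
  assumes k: "k \<ge> 2" and "cmod \<nu> = 1" "cmod \<mu> = 1"
    and fac: "\<And>z. z \<in> ball z0 r \<Longrightarrow> \<phi> z - w0 = (z - z0) ^ k * h z"
    and "isCont h z0" "h z0 \<noteq> 0" "r > 0" "\<rho> > 0"
  shows "\<exists>z. z \<in> ball z0 r \<and> z \<in> sector z0 \<nu> (1/4) \<rho> \<and> \<phi> z \<in> sector w0 \<mu> (1/4) \<rho>"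
proof -
  define c where "c = h z0"
  have "cmod c > 0" using \<open>h z0 \<noteq> 0\<close> by (simp add: c_def)
  obtain u where u: "cmod u = 1" "1/2 \<le> Re (u * cnj \<nu>)" "cmod c / 2 \<le> Re (u ^ k * c * cnj \<mu>)"
    using exists_direction_aligned_with_power[OF k assms(2,3)] \<open>h z0 \<noteq> 0\<close> by (auto simp: c_def)
  have "eventually (\<lambda>z. dist (h z) c < cmod c / 8) (at z0)"
    using \<open>isCont h z0\<close> \<open>cmod c > 0\<close> unfolding isCont_def c_def by (intro tendstoD) auto
  then obtain d where "d > 0" and d: "\<And>z. z \<noteq> z0 \<Longrightarrow> dist z z0 < d \<Longrightarrow> cmod (h z - c) < cmod c / 8"
    unfolding eventually_at by (auto simp: dist_norm)
  define T where "T = min (min \<rho> r) (min (min d 1) (\<rho> / (4 * cmod c)))"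
  define t where "t = T / 2"
  have "T > 0" using \<open>d > 0\<close> \<open>r > 0\<close> \<open>\<rho> > 0\<close> \<open>cmod c > 0\<close> by (simp add: T_def)
  moreover have "T \<le> \<rho>" "T \<le> r" "T \<le> d" "T \<le> 1" "T \<le> \<rho> / (4 * cmod c)"
    by (simp_all add: T_def)
  ultimately have t: "0 < t" "t < \<rho>" "t < r" "t < d" "t \<le> 1" "t < \<rho> / (4 * cmod c)"
    by (simp_all add: t_def)
  then have "t * (4 * cmod c) < \<rho>" using \<open>cmod c > 0\<close> by (simp add: less_divide_eq)
  define z where "z = z0 + of_real t * u"
  have "cmod (z - z0) = t" using u t by (simp add: z_def norm_mult)
  have "z \<in> ball z0 r" using \<open>cmod (z - z0) = t\<close> t by (simp add: dist_norm norm_minus_commute)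
  have "Re ((z - z0) * cnj \<nu>) = t * Re (u * cnj \<nu>)" by (simp add: z_def mult.assoc)
  then have "1/4 * cmod (z - z0) < Re ((z - z0) * cnj \<nu>)"
    using mult_left_mono[OF u(2), of t] t \<open>cmod (z - z0) = t\<close> by simp
  then have "z \<in> sector z0 \<nu> (1/4) \<rho>" using \<open>cmod (z - z0) = t\<close> t by (simp add: sector_def)
  have hz: "cmod (h z - c) < cmod c / 8"
    using d[of z] \<open>cmod (z - z0) = t\<close> t by (auto simp: dist_norm)
  have \<phi>z: "\<phi> z - w0 = of_real (t ^ k) * (u ^ k * h z)"
    using fac[OF \<open>z \<in> ball z0 r\<close>] by (simp add: z_def power_mult_distrib)
  have "t ^ k \<le> t" using power_decreasing[of 1 k t] k t by simp
  then have "cmod (\<phi> z - w0) \<le> t * (9/8 * cmod c)"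
    using perturbed_power_in_sector(2)[OF u(1) \<open>cmod \<mu> = 1\<close> u(3) hz, of "t ^ k"] t \<open>cmod c > 0\<close>
    by (auto simp: \<phi>z intro: order_trans mult_right_mono)
  also have "\<dots> \<le> t * (4 * cmod c)" using t \<open>cmod c > 0\<close> by (intro mult_left_mono) auto
  also have "\<dots> < \<rho>" by fact
  moreover have "1/4 * cmod (\<phi> z - w0) < Re ((\<phi> z - w0) * cnj \<mu>)"
    unfolding \<phi>z using perturbed_power_in_sector(1)[OF u(1) \<open>cmod \<mu> = 1\<close> u(3) hz, of "t ^ k"] t by simp
  ultimately have "\<phi> z \<in> sector w0 \<mu> (1/4) \<rho>" by (simp add: sector_def)
  then show ?thesis using \<open>z \<in> ball z0 r\<close> \<open>z \<in> sector z0 \<nu> (1/4) \<rho>\<close> by blast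
qed

section \<open>Values of \<open>f\<close> on the boundary\<close>

text \<open>A zero of order \<open>k \<ge> 2\<close> would map points of \<open>D\<close> close to \<open>z0\<close> into the sector at \<open>w0\<close>, where
  the count cannot jump.\<close>

lemma mero_mult_at_boundary_le_1:
  assumes mf: "meromorphic_sphere f G" and "D \<subseteq> G" "open D" "z0 \<in> G" "z0 \<notin> D"
    and fz0: "f z0 = Some w0" and cnt: "count_preimages f D (Some w0) = enat n"
    and "cmod \<nu> = 1" "\<delta> > 0" "sector z0 \<nu> (1/4) \<delta> \<subseteq> D"
    and "cmod \<mu> = 1" "\<delta>' > 0" and side: "\<forall>w\<in>sector w0 \<mu> (1/4) \<delta>'. count_preimages f D (Some w) = enat n"
  shows "mero_mult f z0 \<le> 1"
proof (cases "mero_mult f z0")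
  case infinity
  have "z0 islimpt sector z0 \<nu> (1/4) \<delta>"
    using islimpt_sector[of \<nu> "1/4" \<delta> z0] \<open>cmod \<nu> = 1\<close> \<open>\<delta> > 0\<close> by simp
  then have "z0 islimpt D" using islimpt_subset \<open>sector z0 \<nu> (1/4) \<delta> \<subseteq> D\<close> by blast
  then show ?thesis
    using count_preimages_infinite_if_mero_mult_infinite[OF mf \<open>z0 \<in> G\<close> _ infinity] cnt fz0 by simp
next
  case (enat k)
  show ?thesis
  proof (rule ccontr)
    assume "\<not> ?thesis"
    then have "k \<ge> 2" using enat by (simp add: one_enat_def)
    obtain r \<phi> h where "r > 0" and f\<phi>: "\<And>x. x \<in> ball z0 r \<Longrightarrow> f x = Some (\<phi> x)"
      and "isCont h z0" "h z0 \<noteq> 0" and fac: "\<And>z. z \<in> ball z0 r \<Longrightarrow> \<phi> z - w0 = (z - z0) ^ k * h z"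
      using mero_mult_factorization[OF mf \<open>z0 \<in> G\<close> fz0 enat] by blast
    obtain e \<rho> where "e > 0" "\<rho> > 0" and jump: "\<forall>q\<in>D. dist q z0 < \<rho> \<longrightarrow> sphere_near (Some w0) e (f q) \<longrightarrow>
        enat n + 1 \<le> count_preimages f D (f q)"
      using count_preimages_jump[OF mf \<open>D \<subseteq> G\<close> \<open>open D\<close> \<open>z0 \<notin> D\<close> cnt] by blast
    define \<rho>' where "\<rho>' = min (min \<delta> \<delta>') (min e \<rho>)"
    have "\<rho>' > 0" using \<open>\<delta> > 0\<close> \<open>\<delta>' > 0\<close> \<open>e > 0\<close> \<open>\<rho> > 0\<close> by (simp add: \<rho>'_def)
    obtain z where z: "z \<in> ball z0 r" "z \<in> sector z0 \<nu> (1/4) \<rho>'" "\<phi> z \<in> sector w0 \<mu> (1/4) \<rho>'"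
      using zero_of_order_ge_2_maps_sector_into_sector[OF \<open>k \<ge> 2\<close> \<open>cmod \<nu> = 1\<close> \<open>cmod \<mu> = 1\<close> fac
          \<open>isCont h z0\<close> \<open>h z0 \<noteq> 0\<close> \<open>r > 0\<close> \<open>\<rho>' > 0\<close>] by blast
    have "cmod (z - z0) < \<rho>'" "cmod (\<phi> z - w0) < \<rho>'"
      using z by (auto simp: sector_def)
    have "z \<in> sector z0 \<nu> (1/4) \<delta>" "\<phi> z \<in> sector w0 \<mu> (1/4) \<delta>'"
      using z by (auto simp: sector_def \<rho>'_def)
    then have "z \<in> D" "count_preimages f D (f z) = enat n"
      using side f\<phi>[OF \<open>z \<in> ball z0 r\<close>] \<open>sector z0 \<nu> (1/4) \<delta> \<subseteq> D\<close> by auto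
    moreover have "dist z z0 < \<rho>" "sphere_near (Some w0) e (f z)"
      using \<open>cmod (z - z0) < \<rho>'\<close> \<open>cmod (\<phi> z - w0) < \<rho>'\<close> f\<phi>[OF \<open>z \<in> ball z0 r\<close>]
      by (simp_all add: \<rho>'_def dist_norm sphere_near_def)
    ultimately have "enat n + 1 \<le> enat n" using jump by metis
    then show False by (simp add: one_enat_def)
  qed
qed

lemma inside_simple_closed_curve_subset:
  fixes \<gamma> :: "real \<Rightarrow> complex"
  assumes "simply_connected G" "simple_path \<gamma>" "pathfinish \<gamma> = pathstart \<gamma>" "path_image \<gamma> \<subseteq> G"
  shows "inside (path_image \<gamma>) \<subseteq> G"
proof
  fix z assume z: "z \<in> inside (path_image \<gamma>)"
  show "z \<in> G"
  proof (rule ccontr)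
    assume "z \<notin> G"
    then have "winding_number \<gamma> z = 0"
      using assms simple_path_imp_path by (intro simply_connected_imp_winding_number_zero) auto
    moreover have "winding_number \<gamma> z = 1 \<or> winding_number \<gamma> z = -1"
      using simple_closed_path_winding_number_inside assms(2,3) z by blast
    ultimately show False by auto
  qed
qed

lemma outside_contains_large_values:
  assumes "bounded S"
  shows "\<exists>R>0. \<forall>w. R < cmod w \<longrightarrow> w \<in> outside S"
proof -
  obtain B where B: "\<forall>x\<in>- outside S. norm x \<le> B"
    using cobounded_outside[OF assms] unfolding bounded_iff by blast
  show ?thesis
    using B by (intro exI[of _ "max B 1"]) force
qed

context
  fixes f :: "complex \<Rightarrow> csphere" and D \<Gamma> :: "complex set" and n_minus n_plus :: nat
  assumes \<Gamma>: "smooth_jordan_curve \<Gamma>"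
    and count_inside: "\<forall>w\<in>inside \<Gamma>. count_preimages f D (Some w) = enat n_minus"
    and count_outside: "\<forall>w\<in>outside \<Gamma>. count_preimages f D (Some w) = enat n_plus"
begin

lemma count_preimages_locally_constant_off_curve:
  assumes count_infinity: "count_preimages f D None = enat n_plus" and "w0 \<notin> Some ` \<Gamma>"
  shows "\<exists>\<epsilon>>0. \<exists>n. \<forall>w. sphere_near w0 \<epsilon> w \<longrightarrow> count_preimages f D w = enat n"
proof (cases w0)
  case None
  obtain R where "R > 0" and R: "\<forall>w. R < cmod w \<longrightarrow> w \<in> outside \<Gamma>"
    using outside_contains_large_values smooth_jordan_curve_inside_outside(7)[OF \<Gamma>] by blast
  have "count_preimages f D w = enat n_plus" if "sphere_near w0 (1/R) w" for w
  proof (cases w)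
    case (Some a)
    then have "a \<noteq> 0" "cmod (inverse a) < 1/R" using that None by (auto simp: sphere_near_def)
    then have "1 / cmod a < 1 / R" using norm_inverse[of a] by (simp add: inverse_eq_divide)
    moreover have "cmod a > 0" using \<open>a \<noteq> 0\<close> by simp
    ultimately have "R < cmod a" using \<open>R > 0\<close> by (simp add: field_simps)
    then show ?thesis using R count_outside Some by blast
  qed (use count_infinity in simp)
  then show ?thesis using \<open>R > 0\<close> by (intro exI[of _ "1/R"]) auto
next
  case (Some v)
  then have "v \<in> inside \<Gamma> \<or> v \<in> outside \<Gamma>"
    using \<open>w0 \<notin> Some ` \<Gamma>\<close> smooth_jordan_curve_inside_outside(4)[OF \<Gamma>] by blast
  then obtain X n where "open X" "v \<in> X" and X: "\<forall>w\<in>X. count_preimages f D (Some w) = enat n"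
    using count_inside count_outside smooth_jordan_curve_inside_outside(1,2)[OF \<Gamma>] by blast
  then obtain \<epsilon> where "\<epsilon> > 0" "ball v \<epsilon> \<subseteq> X" using openE by blast
  have "count_preimages f D w = enat n" if near: "sphere_near w0 \<epsilon> w" for w
  proof -
    obtain a where "w = Some a" "dist v a < \<epsilon>"
      using near Some by (auto simp: sphere_near_def dist_norm norm_minus_commute)
    then show ?thesis using X \<open>ball v \<epsilon> \<subseteq> X\<close> by auto
  qed
  then show ?thesis using \<open>\<epsilon> > 0\<close> by blast
qed

lemma count_preimages_min_on_sector:
  assumes count_curve: "\<forall>w\<in>\<Gamma>. count_preimages f D (Some w) = enat (min n_minus n_plus)"
    and "w0 \<in> \<Gamma>"
  shows "\<exists>\<mu> \<delta>. cmod \<mu> = 1 \<and> \<delta> > 0 \<and>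
           (\<forall>w\<in>sector w0 \<mu> (1/4) \<delta>. count_preimages f D (Some w) = enat (min n_minus n_plus))"
proof -
  obtain \<mu> \<delta> where sectors: "cmod \<mu> = 1" "\<delta> > 0"
    "sector w0 \<mu> (1/4) \<delta> \<subseteq> inside \<Gamma>" "sector w0 (- \<mu>) (1/4) \<delta> \<subseteq> outside \<Gamma>"
    using smooth_jordan_curve_normal_sectors[OF \<Gamma> \<open>w0 \<in> \<Gamma>\<close>] by blast
  show ?thesis
  proof (cases "n_minus \<le> n_plus")
    case True
    then show ?thesis using sectors count_inside by (intro exI[of _ \<mu>] exI[of _ \<delta>]) auto
  next
    case False
    then show ?thesis using sectors count_outside by (intro exI[of _ "- \<mu>"] exI[of _ \<delta>]) auto
  qed
qed

end

lemma boundary_value_on_curve: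
  assumes mf: "meromorphic_sphere f G" and S: "smooth_jordan_curve S" "S \<subseteq> G" "inside S \<subseteq> G"
    and \<Gamma>: "smooth_jordan_curve \<Gamma>"
    and count_inside: "\<forall>w\<in>inside \<Gamma>. count_preimages f (inside S) (Some w) = enat n_minus"
    and count_outside: "\<forall>w\<in>outside \<Gamma>. count_preimages f (inside S) (Some w) = enat n_plus"
    and count_infinity: "count_preimages f (inside S) None = enat n_plus"
    and "z0 \<in> S"
  shows "f z0 \<in> Some ` \<Gamma>"
proof (rule ccontr)
  assume "f z0 \<notin> Some ` \<Gamma>"
  then obtain \<epsilon> n where "\<epsilon> > 0" and const: "\<forall>w. sphere_near (f z0) \<epsilon> w \<longrightarrow> count_preimages f (inside S) w = enat n"
    using count_preimages_locally_constant_off_curve[OF \<Gamma> count_inside count_outside count_infinity] by blast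
  then have "count_preimages f (inside S) (f z0) = enat n"
    by (cases "f z0") (auto simp: sphere_near_def)
  moreover have "open (inside S)" using smooth_jordan_curve_inside_outside[OF S(1)] by blast
  moreover have "z0 \<notin> inside S" using inside_no_overlap[of S] \<open>z0 \<in> S\<close> by blast
  ultimately obtain e \<rho> where "e > 0" "\<rho> > 0" and jump: "\<forall>q\<in>inside S. dist q z0 < \<rho> \<longrightarrow>
      sphere_near (f z0) e (f q) \<longrightarrow> enat n + 1 \<le> count_preimages f (inside S) (f q)"
    using count_preimages_jump[OF mf \<open>inside S \<subseteq> G\<close>] by blast
  have "z0 islimpt inside S"
    using smooth_jordan_curve_inside_outside(5)[OF S(1)] \<open>z0 \<in> S\<close> \<open>z0 \<notin> inside S\<close>
    by (auto simp: frontier_def closure_def)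
  then obtain q where "q \<in> inside S" "dist q z0 < \<rho>" "sphere_near (f z0) (min e \<epsilon>) (f q)"
    using islimpt_imp_sphere_near_point[OF mf _ _ _ \<open>\<rho> > 0\<close>, of z0 "inside S" "min e \<epsilon>"]
      \<open>z0 \<in> S\<close> \<open>S \<subseteq> G\<close> \<open>e > 0\<close> \<open>\<epsilon> > 0\<close> by auto
  then have "enat n + 1 \<le> enat n"
    using jump const sphere_near_mono[of "f z0" "min e \<epsilon>" "f q"] by (metis min.cobounded1 min.cobounded2)
  then show False by (simp add: one_enat_def)
qed

theorem mainTheorem3:
  fixes G S \<Gamma> :: "complex set" and f :: "complex \<Rightarrow> complex option"
    and n_minus n_plus :: nat
  assumes "open G" and "connected G" and "simply_connected G"
    and "smooth_jordan_curve S" and "S \<subseteq> G"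
    and "smooth_jordan_curve \<Gamma>"
    and "meromorphic_sphere f G"
    and "\<forall>w\<in>inside \<Gamma>. count_preimages f (inside S) (Some w) = enat n_minus"
    and "\<forall>w\<in>outside \<Gamma>. count_preimages f (inside S) (Some w) = enat n_plus"
    and "count_preimages f (inside S) None = enat n_plus"
    and "\<forall>w\<in>\<Gamma>. count_preimages f (inside S) (Some w) = enat (min n_minus n_plus)"
  shows "f ` S \<subseteq> Some ` \<Gamma> \<and> (\<forall>z\<in>S. \<not> critical_point f z)"
proof -
  have "inside S \<subseteq> G"
    using assms(3,4,5) inside_simple_closed_curve_subset unfolding smooth_jordan_curve_def by metis
  have on_curve: "f z0 \<in> Some ` \<Gamma>" if "z0 \<in> S" for z0
    using boundary_value_on_curve[OF assms(7,4,5) \<open>inside S \<subseteq> G\<close> assms(6,8,9,10) that] .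
  have "\<not> critical_point f z0" if z0: "z0 \<in> S" for z0
  proof -
    obtain w0 where "f z0 = Some w0" "w0 \<in> \<Gamma>" using on_curve[OF z0] by blast
    obtain \<nu> \<delta> where "cmod \<nu> = 1" "\<delta> > 0" "sector z0 \<nu> (1/4) \<delta> \<subseteq> inside S"
      using smooth_jordan_curve_normal_sectors[OF assms(4) z0] by blast
    obtain \<mu> \<delta>' where "cmod \<mu> = 1" "\<delta>' > 0"
      "\<forall>w\<in>sector w0 \<mu> (1/4) \<delta>'. count_preimages f (inside S) (Some w) = enat (min n_minus n_plus)"
      using count_preimages_min_on_sector[OF assms(6,8,9,11) \<open>w0 \<in> \<Gamma>\<close>] by blast
    then have "mero_mult f z0 \<le> 1"
      using mero_mult_at_boundary_le_1[OF assms(7) \<open>inside S \<subseteq> G\<close> _ _ _ \<open>f z0 = Some w0\<close>]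
        smooth_jordan_curve_inside_outside[OF assms(4)] assms(11) z0 \<open>S \<subseteq> G\<close> \<open>w0 \<in> \<Gamma>\<close>
        \<open>cmod \<nu> = 1\<close> \<open>\<delta> > 0\<close> \<open>sector z0 \<nu> (1/4) \<delta> \<subseteq> inside S\<close> by blast
    then have "mero_mult f z0 = 1" using mero_mult_ge_1[of f z0] by simp
    then show ?thesis using not_critical_point_if_mero_mult_1 assms(7) z0 \<open>S \<subseteq> G\<close> by blast
  qed
  then show ?thesis using on_curve by blast
qed

end
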